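(* (1) $H(1,0)\wedge H(1,0)\cong A(3\mid 0)$; (2) $H(0,1)\wedge H(0,1)\cong A(1\mid0)$; (3) for $m+n\ge2$, $H(m,n)\wedge H(m,n)\cong A(r\mid s)$ with $r=2m^2-m+\frac{n(n+1)}{2}$ and $s=2mn$; (4) $H_1\wedge H_1\cong A(1\mid 2)$; (5) for $m\ge2$, $H_m\wedge H_m\cong A(m^2\mid m^2)$.
   Context: All algebras are over a field $\mathbb{F}$ of characteristic $\neq 2,3$. $A(r\mid s)$ is the abelian Lie superalgebra of dimension $(r\mid s)$. $H(m,n)$ has even basis $x_1,\dots,x_{2m},z$, odd basis $y_1,\dots,y_n$, nonzero brackets $[x_i,x_{m+i}]=z$, $[y_j,y_j]=z$. $H_m$ has even basis $x_1,\dots,x_m$, odd basis $y_1,\dots,y_m,z$, nonzero brackets $[x_j,y_j]=z$. Non-abelian tensor square: $L\otimes L$ is the Lie superalgebra generated by symbols $x\otimes y$ ($x,y$ homogeneous, $|x\otimes y|=|x|+|y|$) subject to bilinearity, $[x,x']\otimes y=x\otimes[x',y]-(-1)^{|x||x'|}x'\otimes[x,y]$, $x\otimes[y,y']=(-1)^{|y'|(|x|+|y|)}[y',x]\otimes y-(-1)^{|x||y|}[y,x]\otimes y'$, and $[x\otimes y,x'\otimes y']=-(-1)^{|x||y|}[y,x]\otimes[x',y']$. The exterior square is $L\wedge L=(L\otimes L)/(L\square L)$, where $L\square L$ is the graded ideal generated by $x\otimes y+(-1)^{|x||y|}y\otimes x$ for homogeneous $x,y$ and by $x_0\otimes x_0$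 for $x_0\in L_{\bar 0}$. *)

theory Defs
  imports Main "HOL-Library.Function_Algebras"
begin

record ('k, 'v) lsa =
  car :: "'v set"
  evp :: "'v set"
  odp :: "'v set"
  scl :: "'k \<Rightarrow> 'v \<Rightarrow> 'v"
  brk :: "'v \<Rightarrow> 'v \<Rightarrow> 'v"

text \<open>Parity is a bool: False = even, True = odd.\<close>
definition part :: "('k, 'v, 'z) lsa_scheme \<Rightarrow> bool \<Rightarrow> 'v set" where
  "part L d = (if d then odp L else evp L)"

definition psign :: "bool \<Rightarrow> 'k::ring_1" where
  "psign p = (if p then -1 else 1)"

definition lsubspace :: "('k, 'v::ab_group_add, 'z) lsa_scheme \<Rightarrow> 'v set \<Rightarrow> bool" where
  "lsubspace L S \<longleftrightarrow> 0 \<in> S \<and> (\<forall>x\<in>S. \<forall>y\<in>S. x + y \<in> S) \<and> (\<forall>c. \<forall>x\<in>S. scl L c x \<in> S)"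

definition lie_superalgebra :: "('k::field, 'v::ab_group_add) lsa \<Rightarrow> bool" where
  "lie_superalgebra L \<longleftrightarrow>
     lsubspace L (car L) \<and> lsubspace L (evp L) \<and> lsubspace L (odp L) \<and>
     evp L \<subseteq> car L \<and> odp L \<subseteq> car L \<and> evp L \<inter> odp L = {0} \<and>
     (\<forall>x\<in>car L. \<exists>u\<in>evp L. \<exists>v\<in>odp L. x = u + v) \<and>
     (\<forall>a. \<forall>x\<in>car L. \<forall>y\<in>car L. scl L a (x + y) = scl L a x + scl L a y) \<and>
     (\<forall>a b. \<forall>x\<in>car L. scl L (a + b) x = scl L a x + scl L b x) \<and>
     (\<forall>a b. \<forall>x\<in>car L. scl L a (scl L b x) = scl L (a * b) x) \<and>
     (\<forall>x\<in>car L. scl L 1 x = x) \<and>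
     (\<forall>x\<in>car L. \<forall>y\<in>car L. brk L x y \<in> car L) \<and>
     (\<forall>x\<in>car L. \<forall>x'\<in>car L. \<forall>y\<in>car L. brk L (x + x') y = brk L x y + brk L x' y) \<and>
     (\<forall>x\<in>car L. \<forall>y\<in>car L. \<forall>y'\<in>car L. brk L x (y + y') = brk L x y + brk L x y') \<and>
     (\<forall>c. \<forall>x\<in>car L. \<forall>y\<in>car L. brk L (scl L c x) y = scl L c (brk L x y)) \<and>
     (\<forall>c. \<forall>x\<in>car L. \<forall>y\<in>car L. brk L x (scl L c y) = scl L c (brk L x y)) \<and>
     (\<forall>a b. \<forall>x\<in>part L a. \<forall>y\<in>part L b. brk L x y \<in> part L (a \<noteq> b)) \<and>
     (\<forall>a b. \<forall>x\<in>part L a. \<forall>y\<in>part L b.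
        brk L x y = - scl L (psign (a \<and> b)) (brk L y x)) \<and>
     (\<forall>a b c. \<forall>x\<in>part L a. \<forall>y\<in>part L b. \<forall>z\<in>part L c.
        scl L (psign (a \<and> c)) (brk L x (brk L y z))
      + scl L (psign (b \<and> a)) (brk L y (brk L z x))
      + scl L (psign (c \<and> b)) (brk L z (brk L x y)) = 0)"

definition lsa_hom :: "('k, 'v::ab_group_add) lsa \<Rightarrow> ('k, 'w::ab_group_add) lsa \<Rightarrow> ('v \<Rightarrow> 'w) \<Rightarrow> bool" where
  "lsa_hom E M \<phi> \<longleftrightarrow>
     (\<forall>x\<in>car E. \<phi> x \<in> car M) \<and>
     (\<forall>x\<in>car E. \<forall>y\<in>car E. \<phi> (x + y) = \<phi> x + \<phi> y) \<and>
     (\<forall>c. \<forall>x\<in>car E. \<phi> (scl E c x) = scl M c (\<phi> x)) \<and>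
     (\<forall>x\<in>car E. \<forall>y\<in>car E. \<phi> (brk E x y) = brk M (\<phi> x) (\<phi> y)) \<and>
     (\<forall>d. \<forall>x\<in>part E d. \<phi> x \<in> part M d)"

text \<open>An "exterior pairing" L x L -> M: a map x,y |-> x \<and> y satisfying all defining relations
  of the non-abelian tensor square L \<otimes> L (bilinearity, parity, the three relations) together with
  the relations generating L \<box> L.\<close>
definition ext_pairing :: "('k::field, 'v::ab_group_add) lsa \<Rightarrow> ('k, 'w::ab_group_add) lsa \<Rightarrow> ('v \<Rightarrow> 'v \<Rightarrow> 'w) \<Rightarrow> bool" where
  "ext_pairing L M f \<longleftrightarrow>
     (\<forall>x\<in>car L. \<forall>y\<in>car L. f x y \<in> car M) \<and>
     (\<forall>x\<in>car L. \<forall>x'\<in>car L. \<forall>y\<in>car L. f (x + x') y = f x y + f x' y) \<and>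
     (\<forall>x\<in>car L. \<forall>y\<in>car L. \<forall>y'\<in>car L. f x (y + y') = f x y + f x y') \<and>
     (\<forall>c. \<forall>x\<in>car L. \<forall>y\<in>car L. f (scl L c x) y = scl M c (f x y)) \<and>
     (\<forall>c. \<forall>x\<in>car L. \<forall>y\<in>car L. f x (scl L c y) = scl M c (f x y)) \<and>
     (\<forall>a b. \<forall>x\<in>part L a. \<forall>y\<in>part L b. f x y \<in> part M (a \<noteq> b)) \<and>
     (\<forall>a b. \<forall>x\<in>part L a. \<forall>x'\<in>part L b. \<forall>y\<in>car L.
        f (brk L x x') y = f x (brk L x' y) - scl M (psign (a \<and> b)) (f x' (brk L x y))) \<and>
     (\<forall>a b c. \<forall>x\<in>part L a. \<forall>y\<in>part L b. \<forall>y'\<in>part L c.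
        f x (brk L y y') = scl M (psign (c \<and> (a \<noteq> b))) (f (brk L y' x) y)
                         - scl M (psign (a \<and> b)) (f (brk L y x) y')) \<and>
     (\<forall>a b. \<forall>x\<in>part L a. \<forall>y\<in>part L b. \<forall>x'\<in>car L. \<forall>y'\<in>car L.
        brk M (f x y) (f x' y') = - scl M (psign (a \<and> b)) (f (brk L y x) (brk L x' y'))) \<and>
     (\<forall>a b. \<forall>x\<in>part L a. \<forall>y\<in>part L b. f x y + scl M (psign (a \<and> b)) (f y x) = 0) \<and>
     (\<forall>x\<in>evp L. f x x = 0)"

text \<open>E (with some pairing w) is the exterior square L \<and> L, i.e. L \<and> L \<cong> E:
  (E, w) is initial among exterior pairings of L into Lie superalgebras (tested on all Lie
  superalgebras whose elements live in the type 'm).\<close>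
definition is_ext_square ::
  "('k::field, 'v::ab_group_add) lsa \<Rightarrow> ('k, 'w::ab_group_add) lsa \<Rightarrow> 'm::ab_group_add itself \<Rightarrow> bool" where
  "is_ext_square L E _ \<longleftrightarrow>
     lie_superalgebra L \<and> lie_superalgebra E \<and>
     (\<exists>w. ext_pairing L E w \<and>
        (\<forall>(M :: ('k, 'm) lsa) f. lie_superalgebra M \<and> ext_pairing L M f \<longrightarrow>
           (\<exists>\<phi>. lsa_hom E M \<phi> \<and> (\<forall>x\<in>car L. \<forall>y\<in>car L. \<phi> (w x y) = f x y) \<and>
              (\<forall>\<psi>. lsa_hom E M \<psi> \<and> (\<forall>x\<in>car L. \<forall>y\<in>car L. \<psi> (w x y) = f x y)
                    \<longrightarrow> (\<forall>e\<in>car E. \<psi> e = \<phi> e)))))"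

datatype idx = X nat | Y nat | Z

definition supp_in :: "idx set \<Rightarrow> (idx \<Rightarrow> 'k::zero) set" where
  "supp_in S = {v. \<forall>i. v i \<noteq> 0 \<longrightarrow> i \<in> S}"

definition cscale :: "'k::times \<Rightarrow> (idx \<Rightarrow> 'k) \<Rightarrow> (idx \<Rightarrow> 'k)" where
  "cscale c v = (\<lambda>i. c * v i)"

definition Aab :: "nat \<Rightarrow> nat \<Rightarrow> ('k::field, idx \<Rightarrow> 'k) lsa" where
  "Aab r s = \<lparr> car = supp_in ({X i | i. 1 \<le> i \<and> i \<le> r} \<union> {Y j | j. 1 \<le> j \<and> j \<le> s}),
              evp = supp_in {X i | i. 1 \<le> i \<and> i \<le> r},
              odp = supp_in {Y j | j. 1 \<le> j \<and> j \<le> s},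
              scl = cscale,
              brk = (\<lambda>u v. 0) \<rparr>"

text \<open>H(m,n): even basis X 1..X (2m) (= x_i) and Z (= z), odd basis Y 1..Y n (= y_j);
  [x_i, x_{m+i}] = z, [y_j, y_j] = z, extended bilinearly.\<close>
definition Hmn :: "nat \<Rightarrow> nat \<Rightarrow> ('k::field, idx \<Rightarrow> 'k) lsa" where
  "Hmn m n = \<lparr> car = supp_in ({X i | i. 1 \<le> i \<and> i \<le> 2 * m} \<union> {Z} \<union> {Y j | j. 1 \<le> j \<and> j \<le> n}),
              evp = supp_in ({X i | i. 1 \<le> i \<and> i \<le> 2 * m} \<union> {Z}),
              odp = supp_in {Y j | j. 1 \<le> j \<and> j \<le> n},
              scl = cscale,
              brk = (\<lambda>u v i. if i = Z then
                        (\<Sum>k=1..m. u (X k) * v (X (m + k)) - u (X (m + k)) * v (X k))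
                      + (\<Sum>j=1..n. u (Y j) * v (Y j))
                      else 0) \<rparr>"

text \<open>H_m: even basis X 1..X m (= x_j), odd basis Y 1..Y m (= y_j) and Z (= z);
  [x_j, y_j] = z (hence [y_j, x_j] = -z), extended bilinearly.\<close>
definition Hm :: "nat \<Rightarrow> ('k::field, idx \<Rightarrow> 'k) lsa" where
  "Hm m = \<lparr> car = supp_in ({X j | j. 1 \<le> j \<and> j \<le> m} \<union> {Y j | j. 1 \<le> j \<and> j \<le> m} \<union> {Z}),
            evp = supp_in {X j | j. 1 \<le> j \<and> j \<le> m},
            odp = supp_in ({Y j | j. 1 \<le> j \<and> j \<le> m} \<union> {Z}),
            scl = cscale,
            brk = (\<lambda>u v i. if i = Z then
                      (\<Sum>j=1..m. u (X j) * v (Y j) - u (Y j) * v (X j))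
                    else 0) \<rparr>"

end

theory Submission
  imports Defs
begin

text \<open>
  By the defining relations, L \<and> L is spanned by the wedges of pairs of basis vectors, where
  a \<and> a = 0 for even a, b \<and> a = \<plusminus> a \<and> b, and Z \<and> c = [x, x'] \<and> c = 0 whenever x, x' are
  basis vectors with [x, x'] = Z that commute with c. What remains are the wedges x_i \<and> x_j
  (i < j), y_i \<and> y_j (i \<le> j) and x_i \<and> y_j, except in three small cases: in H(0,1) and H_1 the
  wedge y_1 \<and> Z vanishes by a separate computation because 3, resp. 2, is invertible, while
  x_1 \<and> Z, x_2 \<and> Z in H(1,0) and x_1 \<and> Z in H_1 survive. These wedges form a basis: reading off
  the coordinates of u \<and> v along them gives a pairing L \<times> L \<rightarrow> A(r|s) satisfying all defining
  relations, those involving brackets trivially when no basis wedge involves Z, both sides being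
  zero. Counting the wedges gives r and s.
\<close>

definition delta :: "idx \<Rightarrow> idx \<Rightarrow> 'k::{zero,one}" where
  "delta b = (\<lambda>i. if i = b then 1 else 0)"

lemma delta_same [simp]: "delta b b = 1"
  and delta_apply_other: "b \<noteq> i \<Longrightarrow> delta b i = 0"
  by (auto simp: delta_def)

definition XS :: "nat \<Rightarrow> idx set" where "XS N = X ` {1..N}"
definition YS :: "nat \<Rightarrow> idx set" where "YS N = Y ` {1..N}"

lemma XS_simps [simp]: "X i \<in> XS N \<longleftrightarrow> 1 \<le> i \<and> i \<le> N" "Y i \<notin> XS N" "Z \<notin> XS N"
  by (auto simp: XS_def)

lemma YS_simps [simp]: "Y i \<in> YS N \<longleftrightarrow> 1 \<le> i \<and> i \<le> N" "X i \<notin> YS N" "Z \<notin> YS N"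
  by (auto simp: YS_def)

lemma XS_Collect: "{X i | i. 1 \<le> i \<and> i \<le> N} = XS N"
  and YS_Collect: "{Y i | i. 1 \<le> i \<and> i \<le> N} = YS N"
  by (auto simp: XS_def YS_def)

lemma finite_XS [simp]: "finite (XS N)" and finite_YS [simp]: "finite (YS N)"
  by (simp_all add: XS_def YS_def)

lemma sum_fun_apply: "sum g A i = (\<Sum>a\<in>A. g a i)"
  by (induction A rule: infinite_finite_induct) auto

lemma cscale_apply [simp]: "cscale c v k = c * v k"
  by (simp add: cscale_def)

lemma cscale_simps:
  "cscale a (x + y) = cscale a x + cscale a y"
  "cscale (a + b) x = cscale a x + cscale b x"
  "cscale a (cscale b x) = cscale (a * b) x"
  "cscale 1 x = x"
  "cscale a 0 = 0"
  "cscale 0 x = 0"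
  for x y :: "idx \<Rightarrow> 'k::field"
  by (auto simp: fun_eq_iff algebra_simps)

lemma supp_in_iff: "v \<in> supp_in S \<longleftrightarrow> (\<forall>i. i \<notin> S \<longrightarrow> v i = 0)"
  by (auto simp: supp_in_def)

lemma zero_in_supp_in [simp]: "0 \<in> supp_in S"
  by (simp add: supp_in_iff)

lemma delta_in_supp_in: "b \<in> S \<Longrightarrow> delta b \<in> supp_in S"
  by (auto simp: supp_in_iff delta_def)

lemma supp_in_mono: "A \<subseteq> B \<Longrightarrow> supp_in A \<subseteq> supp_in B"
  by (auto simp: supp_in_def)

lemma supp_in_disjoint:
  "A \<inter> B = {} \<Longrightarrow> supp_in A \<inter> (supp_in B :: (idx \<Rightarrow> 'k::zero) set) = {0}"
  by (auto simp: supp_in_def fun_eq_iff; meson disjoint_iff)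

lemma supp_in_Un_split:
  fixes x :: "idx \<Rightarrow> 'k::comm_monoid_add"
  assumes "A \<inter> B = {}" "x \<in> supp_in (A \<union> B)"
  shows "\<exists>u\<in>supp_in A. \<exists>v\<in>supp_in B. x = u + v"
proof (intro bexI)
  show "x = (\<lambda>i. if i \<in> A then x i else 0) + (\<lambda>i. if i \<in> B then x i else 0)"
    using assms by (auto simp: supp_in_def fun_eq_iff)
qed (auto simp: supp_in_def)

lemma supp_in_eq_sum_delta:
  fixes x :: "idx \<Rightarrow> 'k::field"
  assumes "finite S" "x \<in> supp_in S"
  shows "x = (\<Sum>i\<in>S. cscale (x i) (delta i))"
proof
  fix j
  have "(\<Sum>i\<in>S. cscale (x i) (delta i)) j = (\<Sum>i\<in>S. if i = j then x i else 0)"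
    unfolding sum_fun_apply by (intro sum.cong) (auto simp: delta_def)
  then show "x j = (\<Sum>i\<in>S. cscale (x i) (delta i)) j"
    using assms by (auto simp: supp_in_iff)
qed

lemma lsubspace_supp_in:
  "scl (L :: ('k::field, idx \<Rightarrow> 'k, 'z) lsa_scheme) = cscale \<Longrightarrow> lsubspace L (supp_in S)"
  by (auto simp: lsubspace_def supp_in_iff)

lemma lsubspace_sum:
  assumes "lsubspace L S" "\<And>i. i \<in> A \<Longrightarrow> g i \<in> S"
  shows "sum g A \<in> S"
  using assms(2)
  by (induction A rule: infinite_finite_induct) (use assms(1) in \<open>auto simp: lsubspace_def\<close>)

lemma additive_on_sum:
  fixes \<phi> :: "'a::comm_monoid_add \<Rightarrow> 'b::ab_group_add"
  assumes "0 \<in> S" "\<And>x y. x \<in> S \<Longrightarrow> y \<in> S \<Longrightarrow> x + y \<in> S"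
    and add: "\<And>x y. x \<in> S \<Longrightarrow> y \<in> S \<Longrightarrow> \<phi> (x + y) = \<phi> x + \<phi> y"
    and "\<And>i. i \<in> A \<Longrightarrow> g i \<in> S"
  shows "\<phi> (sum g A) = (\<Sum>i\<in>A. \<phi> (g i))"
proof -
  have "\<phi> 0 = 0"
    using add[OF \<open>0 \<in> S\<close> \<open>0 \<in> S\<close>] by simp
  have "\<phi> (sum g A) = (\<Sum>i\<in>A. \<phi> (g i)) \<and> sum g A \<in> S"
    using assms(4)
    by (induction A rule: infinite_finite_induct) (auto simp: \<open>\<phi> 0 = 0\<close> assms(1,2) add)
  then show ?thesis ..
qed

lemma psign_simps [simp]: "psign True = -1" "psign False = 1"
  by (simp_all add: psign_def)

context
  fixes M :: "('k::field, 'm::ab_group_add) lsa"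
  assumes M: "lie_superalgebra M"
begin

lemma lsa_lsubspace_car: "lsubspace M (car M)"
  using M unfolding lie_superalgebra_def by (elim conjE) assumption

lemma lsa_lsubspace_evp: "lsubspace M (evp M)"
  using M unfolding lie_superalgebra_def by (elim conjE) assumption

lemma lsa_lsubspace_odp: "lsubspace M (odp M)"
  using M unfolding lie_superalgebra_def by (elim conjE) assumption

lemma lsa_evp_subset: "evp M \<subseteq> car M"
  using M unfolding lie_superalgebra_def by (elim conjE) assumption

lemma lsa_odp_subset: "odp M \<subseteq> car M"
  using M unfolding lie_superalgebra_def by (elim conjE) assumption

lemma lsa_lsubspace_part: "lsubspace M (part M d)"
  by (simp add: part_def lsa_lsubspace_evp lsa_lsubspace_odp)

lemma lsa_part_subset: "part M d \<subseteq> car M"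
  by (simp add: part_def lsa_evp_subset lsa_odp_subset)

lemma lsa_zero: "0 \<in> car M"
  and lsa_add_closed: "x \<in> car M \<Longrightarrow> y \<in> car M \<Longrightarrow> x + y \<in> car M"
  and lsa_scl_closed: "x \<in> car M \<Longrightarrow> scl M c x \<in> car M"
  using lsa_lsubspace_car by (auto simp: lsubspace_def)

lemma lsa_sum_closed: "(\<And>i. i \<in> A \<Longrightarrow> g i \<in> car M) \<Longrightarrow> sum g A \<in> car M"
  using lsubspace_sum[OF lsa_lsubspace_car] .

lemma lsa_scl_add_right: "x \<in> car M \<Longrightarrow> y \<in> car M \<Longrightarrow> scl M a (x + y) = scl M a x + scl M a y"
  using M unfolding lie_superalgebra_def by (elim conjE) metis

lemma lsa_scl_add_left: "x \<in> car M \<Longrightarrow> scl M (a + b) x = scl M a x + scl M b x"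
  using M unfolding lie_superalgebra_def by (elim conjE) metis

lemma lsa_scl_scl: "x \<in> car M \<Longrightarrow> scl M a (scl M b x) = scl M (a * b) x"
  using M unfolding lie_superalgebra_def by (elim conjE) metis

lemma lsa_scl_one: "x \<in> car M \<Longrightarrow> scl M 1 x = x"
  using M unfolding lie_superalgebra_def by (elim conjE) metis

lemma lsa_brk_closed: "x \<in> car M \<Longrightarrow> y \<in> car M \<Longrightarrow> brk M x y \<in> car M"
  using M unfolding lie_superalgebra_def by (elim conjE) metis

lemma lsa_brk_add_left:
  "x \<in> car M \<Longrightarrow> x' \<in> car M \<Longrightarrow> y \<in> car M \<Longrightarrow> brk M (x + x') y = brk M x y + brk M x' y"
  using M unfolding lie_superalgebra_def by (elim conjE) metis

lemma lsa_brk_add_right: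
  "x \<in> car M \<Longrightarrow> y \<in> car M \<Longrightarrow> y' \<in> car M \<Longrightarrow> brk M x (y + y') = brk M x y + brk M x y'"
  using M unfolding lie_superalgebra_def by (elim conjE) metis

lemma lsa_brk_scl_left: "x \<in> car M \<Longrightarrow> y \<in> car M \<Longrightarrow> brk M (scl M c x) y = scl M c (brk M x y)"
  using M unfolding lie_superalgebra_def by (elim conjE) metis

lemma lsa_brk_scl_right: "x \<in> car M \<Longrightarrow> y \<in> car M \<Longrightarrow> brk M x (scl M c y) = scl M c (brk M x y)"
  using M unfolding lie_superalgebra_def by (elim conjE) metis

lemma lsa_scl_zero_left: "x \<in> car M \<Longrightarrow> scl M 0 x = 0"
  using lsa_scl_add_left[of x 0 0] by simp

lemma lsa_scl_zero_right: "scl M c 0 = 0"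
  using lsa_scl_add_right[OF lsa_zero lsa_zero, of c] by simp

lemma lsa_scl_minus: "x \<in> car M \<Longrightarrow> scl M (- c) x = - scl M c x"
  using lsa_scl_add_left[of x c "- c"] lsa_scl_zero_left[of x] minus_unique by fastforce

lemma lsa_scl_cancel:
  assumes "x \<in> car M" "c \<noteq> 0" "scl M c x = 0"
  shows "x = 0"
  using lsa_scl_scl[OF assms(1), of "inverse c" c] assms
  by (simp add: lsa_scl_zero_right lsa_scl_one)

lemma lsa_scl_sum_right:
  "(\<And>i. i \<in> A \<Longrightarrow> g i \<in> car M) \<Longrightarrow> scl M c (sum g A) = (\<Sum>i\<in>A. scl M c (g i))"
  by (rule additive_on_sum[where S = "car M"]) (auto intro: lsa_zero lsa_add_closed lsa_scl_add_right)

lemma lsa_brk_sum_left: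
  "(\<And>i. i \<in> A \<Longrightarrow> g i \<in> car M) \<Longrightarrow> y \<in> car M \<Longrightarrow> brk M (sum g A) y = (\<Sum>i\<in>A. brk M (g i) y)"
  by (rule additive_on_sum[where \<phi> = "\<lambda>x. brk M x y" and S = "car M"]) (auto intro: lsa_zero lsa_add_closed lsa_brk_add_left)

lemma lsa_brk_sum_right:
  "(\<And>i. i \<in> A \<Longrightarrow> g i \<in> car M) \<Longrightarrow> x \<in> car M \<Longrightarrow> brk M x (sum g A) = (\<Sum>i\<in>A. brk M x (g i))"
  by (rule additive_on_sum[where S = "car M"]) (auto intro: lsa_zero lsa_add_closed lsa_brk_add_right)

end

definition bilinear_on ::
  "('k::field, 'v::ab_group_add) lsa \<Rightarrow> ('k, 'w::ab_group_add) lsa \<Rightarrow> ('v \<Rightarrow> 'v \<Rightarrow> 'w) \<Rightarrow> bool" where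
  "bilinear_on L M f \<longleftrightarrow>
     (\<forall>x\<in>car L. \<forall>y\<in>car L. f x y \<in> car M) \<and>
     (\<forall>x\<in>car L. \<forall>x'\<in>car L. \<forall>y\<in>car L. f (x + x') y = f x y + f x' y) \<and>
     (\<forall>x\<in>car L. \<forall>y\<in>car L. \<forall>y'\<in>car L. f x (y + y') = f x y + f x y') \<and>
     (\<forall>c. \<forall>x\<in>car L. \<forall>y\<in>car L. f (scl L c x) y = scl M c (f x y)) \<and>
     (\<forall>c. \<forall>x\<in>car L. \<forall>y\<in>car L. f x (scl L c y) = scl M c (f x y))"

context
  fixes L :: "('k::field, 'v::ab_group_add) lsa" and M :: "('k, 'w::ab_group_add) lsa" and f
  assumes f: "bilinear_on L M f"
begin

lemma bilinear_on_closed: "x \<in> car L \<Longrightarrow> y \<in> car L \<Longrightarrow> f x y \<in> car M"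
  using f unfolding bilinear_on_def by (elim conjE) metis

lemma bilinear_on_add_left: "x \<in> car L \<Longrightarrow> x' \<in> car L \<Longrightarrow> y \<in> car L \<Longrightarrow> f (x + x') y = f x y + f x' y"
  using f unfolding bilinear_on_def by (elim conjE) metis

lemma bilinear_on_add_right: "x \<in> car L \<Longrightarrow> y \<in> car L \<Longrightarrow> y' \<in> car L \<Longrightarrow> f x (y + y') = f x y + f x y'"
  using f unfolding bilinear_on_def by (elim conjE) metis

lemma bilinear_on_scl_left: "x \<in> car L \<Longrightarrow> y \<in> car L \<Longrightarrow> f (scl L c x) y = scl M c (f x y)"
  using f unfolding bilinear_on_def by (elim conjE) metis

lemma bilinear_on_scl_right: "x \<in> car L \<Longrightarrow> y \<in> car L \<Longrightarrow> f x (scl L c y) = scl M c (f x y)"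
  using f unfolding bilinear_on_def by (elim conjE) metis

context
  assumes L: "lsubspace L (car L)"
begin

lemma bilinear_on_zero_right: "x \<in> car L \<Longrightarrow> f x 0 = 0"
  using bilinear_on_add_right[of x 0 0] L by (simp add: lsubspace_def)

lemma bilinear_on_sum_left:
  "(\<And>i. i \<in> A \<Longrightarrow> g i \<in> car L) \<Longrightarrow> y \<in> car L \<Longrightarrow> f (sum g A) y = (\<Sum>i\<in>A. f (g i) y)"
  by (rule additive_on_sum[where \<phi> = "\<lambda>x. f x y" and S = "car L"]) (use L in \<open>auto simp: lsubspace_def bilinear_on_add_left\<close>)

lemma bilinear_on_sum_right:
  "(\<And>i. i \<in> A \<Longrightarrow> g i \<in> car L) \<Longrightarrow> x \<in> car L \<Longrightarrow> f x (sum g A) = (\<Sum>i\<in>A. f x (g i))"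
  by (rule additive_on_sum[where S = "car L"]) (use L in \<open>auto simp: lsubspace_def bilinear_on_add_right\<close>)

end

end

lemma bilinear_on_expand:
  fixes L :: "('k::field, idx \<Rightarrow> 'k) lsa" and M :: "('k, 'm::ab_group_add) lsa"
  assumes M: "lie_superalgebra M" and f: "bilinear_on L M f"
    and L: "car L = supp_in S" "finite S" "scl L = cscale"
    and x: "x \<in> car L" and y: "y \<in> car L"
  shows "f x y = (\<Sum>i\<in>S. \<Sum>j\<in>S. scl M (x i * y j) (f (delta i) (delta j)))"
proof -
  have Ls: "lsubspace L (car L)"
    using L by (simp add: lsubspace_supp_in)
  have d: "delta i \<in> car L" if "i \<in> S" for i
    using that L by (simp add: delta_in_supp_in)
  have cd: "cscale c (delta i) \<in> car L" if "i \<in> S" for i c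
    using d[OF that] Ls L(3) by (metis lsubspace_def)
  have "f x y = f (\<Sum>i\<in>S. cscale (x i) (delta i)) (\<Sum>j\<in>S. cscale (y j) (delta j))"
    using supp_in_eq_sum_delta[OF L(2)] x y L(1) by metis
  also have "\<dots> = (\<Sum>i\<in>S. \<Sum>j\<in>S. f (cscale (x i) (delta i)) (cscale (y j) (delta j)))"
    using cd lsubspace_sum[OF Ls, of S "\<lambda>j. cscale (y j) (delta j)"]
    by (simp add: bilinear_on_sum_left[OF f Ls] bilinear_on_sum_right[OF f Ls])
  also have "\<dots> = (\<Sum>i\<in>S. \<Sum>j\<in>S. scl M (x i * y j) (f (delta i) (delta j)))"
    using d cd L(3)
    by (intro sum.cong refl)
       (simp add: bilinear_on_scl_left[OF f, unfolded L(3)] bilinear_on_scl_right[OF f, unfolded L(3)]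
         lsa_scl_scl[OF M] bilinear_on_closed[OF f] mult.commute)
  finally show ?thesis .
qed

lemma bilinear_on_eq_on_delta:
  fixes L :: "('k::field, idx \<Rightarrow> 'k) lsa" and M :: "('k, 'm::ab_group_add) lsa"
  assumes M: "lie_superalgebra M" and "bilinear_on L M f" "bilinear_on L M g"
    and L: "car L = supp_in S" "finite S" "scl L = cscale"
    and fg: "\<And>i j. i \<in> S \<Longrightarrow> j \<in> S \<Longrightarrow> f (delta i) (delta j) = g (delta i) (delta j)"
    and "x \<in> car L" "y \<in> car L"
  shows "f x y = g x y"
  using assms by (simp add: bilinear_on_expand[OF M _ L] fg)

lemma bilinear_on_coord_comb:
  fixes L :: "('k::field, 'v::ab_group_add) lsa" and M :: "('k, 'm::ab_group_add) lsa"
    and w :: "'v \<Rightarrow> 'v \<Rightarrow> idx \<Rightarrow> 'k"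
  assumes M: "lie_superalgebra M" and w: "bilinear_on L E w" and E: "scl E = cscale"
    and F: "\<And>k. k \<in> B \<Longrightarrow> F k \<in> car M"
  shows "bilinear_on L M (\<lambda>x y. \<Sum>k\<in>B. scl M (w x y k) (F k))"
  unfolding bilinear_on_def
proof (intro conjI ballI allI)
  fix x y c assume x: "x \<in> car L" and y: "y \<in> car L"
  show "(\<Sum>k\<in>B. scl M (w x y k) (F k)) \<in> car M"
    using F by (intro lsa_sum_closed[OF M] lsa_scl_closed[OF M]) auto
  have "scl M c (\<Sum>k\<in>B. scl M (w x y k) (F k)) = (\<Sum>k\<in>B. scl M (c * w x y k) (F k))"
    using F by (simp add: lsa_scl_sum_right[OF M] lsa_scl_closed[OF M] lsa_scl_scl[OF M])
  then show "(\<Sum>k\<in>B. scl M (w (scl L c x) y k) (F k)) = scl M c (\<Sum>k\<in>B. scl M (w x y k) (F k))"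
    and "(\<Sum>k\<in>B. scl M (w x (scl L c y) k) (F k)) = scl M c (\<Sum>k\<in>B. scl M (w x y k) (F k))"
    using x y by (simp_all add: bilinear_on_scl_left[OF w] bilinear_on_scl_right[OF w] E)
next
  fix x x' y assume "x \<in> car L" "x' \<in> car L" "y \<in> car L"
  then show "(\<Sum>k\<in>B. scl M (w (x + x') y k) (F k))
      = (\<Sum>k\<in>B. scl M (w x y k) (F k)) + (\<Sum>k\<in>B. scl M (w x' y k) (F k))"
    using F by (simp add: bilinear_on_add_left[OF w] lsa_scl_add_left[OF M] sum.distrib)
next
  fix x y y' assume "x \<in> car L" "y \<in> car L" "y' \<in> car L"
  then show "(\<Sum>k\<in>B. scl M (w x (y + y') k) (F k))
      = (\<Sum>k\<in>B. scl M (w x y k) (F k)) + (\<Sum>k\<in>B. scl M (w x y' k) (F k))"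
    using F by (simp add: bilinear_on_add_right[OF w] lsa_scl_add_left[OF M] sum.distrib)
qed

context
  fixes L :: "('k::field, 'v::ab_group_add) lsa" and M :: "('k, 'w::ab_group_add) lsa" and f
  assumes f: "ext_pairing L M f"
begin

lemma ext_pairing_bilinear_on: "bilinear_on L M f"
  using f unfolding ext_pairing_def bilinear_on_def by (elim conjE) (intro conjI; assumption)

lemma ext_pairing_closed: "x \<in> car L \<Longrightarrow> y \<in> car L \<Longrightarrow> f x y \<in> car M"
  using f unfolding ext_pairing_def by (elim conjE) metis

lemma ext_pairing_part: "x \<in> part L a \<Longrightarrow> y \<in> part L b \<Longrightarrow> f x y \<in> part M (a \<noteq> b)"
  using f unfolding ext_pairing_def by (elim conjE) metis

lemma ext_pairing_brk_left: "x \<in> part L a \<Longrightarrow> x' \<in> part L b \<Longrightarrow> y \<in> car L \<Longrightarrow>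
    f (brk L x x') y = f x (brk L x' y) - scl M (psign (a \<and> b)) (f x' (brk L x y))"
  using f unfolding ext_pairing_def by (elim conjE) metis

lemma ext_pairing_brk_pairing: "x \<in> part L a \<Longrightarrow> y \<in> part L b \<Longrightarrow> x' \<in> car L \<Longrightarrow> y' \<in> car L \<Longrightarrow>
    brk M (f x y) (f x' y') = - scl M (psign (a \<and> b)) (f (brk L y x) (brk L x' y'))"
  using f unfolding ext_pairing_def by (elim conjE) metis

lemma ext_pairing_swap: "x \<in> part L a \<Longrightarrow> y \<in> part L b \<Longrightarrow> f x y + scl M (psign (a \<and> b)) (f y x) = 0"
  using f unfolding ext_pairing_def by (elim conjE) metis

lemma ext_pairing_diag: "x \<in> evp L \<Longrightarrow> f x x = 0"
  using f unfolding ext_pairing_def by (elim conjE) metis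

end

section \<open>The abelian superalgebra A(r|s) as an exterior square\<close>

lemma Aab_car: "car (Aab r s) = supp_in (XS r \<union> YS s)"
  and Aab_evp: "evp (Aab r s) = supp_in (XS r)"
  and Aab_odp: "odp (Aab r s) = supp_in (YS s)"
  and Aab_scl: "scl (Aab r s) = cscale"
  and Aab_brk: "brk (Aab r s) = (\<lambda>u v. 0)"
  unfolding Aab_def XS_Collect YS_Collect by simp_all

lemma XS_YS_disjoint: "XS r \<inter> YS s = {}"
  by (auto simp: XS_def YS_def)

lemma lie_superalgebra_Aab: "lie_superalgebra (Aab r s :: ('k::field, idx \<Rightarrow> 'k) lsa)"
  unfolding lie_superalgebra_def Aab_car Aab_evp Aab_odp Aab_scl Aab_brk
proof (intro conjI)
  show "supp_in (XS r) \<inter> supp_in (YS s) = ({0} :: (idx \<Rightarrow> 'k) set)"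
    by (rule supp_in_disjoint[OF XS_YS_disjoint])
  show "\<forall>x\<in>supp_in (XS r \<union> YS s). \<exists>u\<in>supp_in (XS r). \<exists>v\<in>supp_in (YS s). x = (u :: idx \<Rightarrow> 'k) + v"
    using supp_in_Un_split[OF XS_YS_disjoint] by blast
  show "supp_in (XS r) \<subseteq> supp_in (XS r \<union> YS s)" "supp_in (YS s) \<subseteq> supp_in (XS r \<union> YS s)"
    by (simp_all add: supp_in_mono)
qed (simp_all add: lsubspace_def supp_in_iff part_def Aab_evp Aab_odp Aab_scl cscale_simps)

lemma delta_in_part_Aab:
  assumes "b \<in> XS r \<union> YS s" "delta b \<in> part (Aab r s) d"
  shows "d \<longleftrightarrow> b \<in> YS s"
  using assms XS_YS_disjoint
  by (cases d) (auto simp: part_def Aab_evp Aab_odp supp_in_iff delta_def split: if_splits)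

lemma lsa_hom_add: "lsa_hom E M \<psi> \<Longrightarrow> x \<in> car E \<Longrightarrow> y \<in> car E \<Longrightarrow> \<psi> (x + y) = \<psi> x + \<psi> y"
  and lsa_hom_scl: "lsa_hom E M \<psi> \<Longrightarrow> x \<in> car E \<Longrightarrow> \<psi> (scl E c x) = scl M c (\<psi> x)"
  unfolding lsa_hom_def by blast+

lemma lsa_hom_Aab_expand:
  assumes \<psi>: "lsa_hom (Aab r s) M \<psi>" and e: "e \<in> car (Aab r s)"
  shows "\<psi> e = (\<Sum>b\<in>XS r \<union> YS s. scl M (e b) (\<psi> (delta b)))"
proof -
  let ?B = "XS r \<union> YS s"
  have sub: "lsubspace (Aab r s) (car (Aab r s))"
    by (rule lsa_lsubspace_car[OF lie_superalgebra_Aab])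
  have d: "delta b \<in> car (Aab r s)" "cscale c (delta b) \<in> car (Aab r s)" if "b \<in> ?B" for b c
    using that by (auto simp: Aab_car supp_in_iff delta_def)
  have "\<psi> e = \<psi> (\<Sum>b\<in>?B. cscale (e b) (delta b))"
    using e by (metis Aab_car finite_UnI finite_XS finite_YS supp_in_eq_sum_delta)
  also have "\<dots> = (\<Sum>b\<in>?B. \<psi> (cscale (e b) (delta b)))"
    by (rule additive_on_sum[where S = "car (Aab r s)"])
      (blast intro: lsa_zero[OF lie_superalgebra_Aab] lsa_add_closed[OF lie_superalgebra_Aab]
        lsa_hom_add[OF \<psi>] d(2))+
  also have "\<dots> = (\<Sum>b\<in>?B. scl M (e b) (\<psi> (delta b)))"
    using lsa_hom_scl[OF \<psi> d(1)] by (simp add: Aab_scl)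
  finally show ?thesis .
qed

lemma lsa_hom_from_Aab:
  fixes M :: "('k::field, 'm::ab_group_add) lsa"
  assumes M: "lie_superalgebra M"
    and F: "\<And>b. b \<in> XS r \<union> YS s \<Longrightarrow> F b \<in> part M (b \<in> YS s)"
    and F_brk: "\<And>b c. b \<in> XS r \<union> YS s \<Longrightarrow> c \<in> XS r \<union> YS s \<Longrightarrow> brk M (F b) (F c) = 0"
  shows "lsa_hom (Aab r s) M (\<lambda>e. \<Sum>b\<in>XS r \<union> YS s. scl M (e b) (F b))"
    (is "lsa_hom _ _ ?\<phi>")
proof -
  let ?B = "XS r \<union> YS s"
  have Fc: "F b \<in> car M" if "b \<in> ?B" for b
    using F[OF that] lsa_part_subset[OF M] by blast
  have \<phi>c: "?\<phi> e \<in> car M" for e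
    using Fc by (intro lsa_sum_closed[OF M] lsa_scl_closed[OF M]) auto
  have \<phi>_brk: "brk M (F b) (?\<phi> y) = 0" if b: "b \<in> ?B" for b y
  proof -
    have "brk M (F b) (?\<phi> y) = (\<Sum>c\<in>?B. scl M (y c) (brk M (F b) (F c)))"
      using b Fc by (subst lsa_brk_sum_right[OF M]) (auto simp: lsa_scl_closed[OF M] lsa_brk_scl_right[OF M])
    also have "\<dots> = 0"
      using b F_brk by (intro sum.neutral ballI) (simp add: lsa_scl_zero_right[OF M])
    finally show ?thesis .
  qed
  show ?thesis
    unfolding lsa_hom_def
  proof (intro conjI ballI allI)
    fix x y c d
    show "?\<phi> x \<in> car M" by (rule \<phi>c)
    show "?\<phi> (x + y) = ?\<phi> x + ?\<phi> y"
      using Fc by (simp add: lsa_scl_add_left[OF M] sum.distrib)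
    show "?\<phi> (scl (Aab r s) c x) = scl M c (?\<phi> x)"
      using Fc by (subst lsa_scl_sum_right[OF M]) (auto simp: Aab_scl lsa_scl_closed[OF M] lsa_scl_scl[OF M])
    have "brk M (?\<phi> x) (?\<phi> y) = (\<Sum>b\<in>?B. scl M (x b) (brk M (F b) (?\<phi> y)))"
      using Fc \<phi>c by (subst lsa_brk_sum_left[OF M]) (auto simp: lsa_scl_closed[OF M] lsa_brk_scl_left[OF M])
    also have "\<dots> = 0"
      using \<phi>_brk by (intro sum.neutral ballI) (simp add: lsa_scl_zero_right[OF M])
    finally show "?\<phi> (brk (Aab r s) x y) = brk M (?\<phi> x) (?\<phi> y)"
      using Fc by (simp add: Aab_brk lsa_scl_zero_left[OF M])
    assume x: "x \<in> part (Aab r s) d"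
    have "scl M (x b) (F b) \<in> part M d" if "b \<in> ?B" for b
    proof (cases "x b = 0")
      case True
      then show ?thesis
        using lsa_scl_zero_left[OF M Fc[OF that]] lsa_lsubspace_part[OF M] by (simp add: lsubspace_def)
    next
      case False
      then have "d \<longleftrightarrow> b \<in> YS s"
        using x that XS_YS_disjoint by (cases d) (auto simp: part_def Aab_evp Aab_odp supp_in_iff)
      then show ?thesis
        using F[OF that] lsa_lsubspace_part[OF M] by (simp add: lsubspace_def)
    qed
    then show "?\<phi> x \<in> part M d"
      by (intro lsubspace_sum[OF lsa_lsubspace_part[OF M]])
  qed
qed

lemma is_ext_square_AabI:
  fixes L :: "('k::field, 'v::ab_group_add) lsa" and w :: "'v \<Rightarrow> 'v \<Rightarrow> idx \<Rightarrow> 'k"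
  assumes L: "lie_superalgebra L"
    and w: "ext_pairing L (Aab r s) w"
    and p: "\<And>b. b \<in> XS r \<union> YS s \<Longrightarrow> \<exists>a. p b \<in> part L a"
    and q: "\<And>b. b \<in> XS r \<union> YS s \<Longrightarrow> \<exists>a. q b \<in> part L a"
    and w_pq: "\<And>b. b \<in> XS r \<union> YS s \<Longrightarrow> w (p b) (q b) = delta b"
    and factor: "\<And>(M::('k, 'm::ab_group_add) lsa) f x y. lie_superalgebra M \<Longrightarrow> ext_pairing L M f \<Longrightarrow>
        x \<in> car L \<Longrightarrow> y \<in> car L \<Longrightarrow> f x y = (\<Sum>b\<in>XS r \<union> YS s. scl M (w x y b) (f (p b) (q b)))"
  shows "is_ext_square L (Aab r s) TYPE('m)"
proof -
  let ?B = "XS r \<union> YS s"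
  have pc: "p b \<in> car L" and qc: "q b \<in> car L" if "b \<in> ?B" for b
    using p[OF that] q[OF that] lsa_part_subset[OF L] by blast+
  have "\<exists>\<phi>. lsa_hom (Aab r s) M \<phi> \<and> (\<forall>x\<in>car L. \<forall>y\<in>car L. \<phi> (w x y) = f x y) \<and>
          (\<forall>\<psi>. lsa_hom (Aab r s) M \<psi> \<and> (\<forall>x\<in>car L. \<forall>y\<in>car L. \<psi> (w x y) = f x y)
                \<longrightarrow> (\<forall>e\<in>car (Aab r s). \<psi> e = \<phi> e))"
    if M: "lie_superalgebra M" and f: "ext_pairing L M f" for M :: "('k, 'm) lsa" and f
  proof (intro exI conjI allI impI ballI)
    define F where "F b = f (p b) (q b)" for b
    have F_part: "F b \<in> part M (b \<in> YS s)" if b: "b \<in> ?B" for b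
    proof -
      obtain a1 a2 where a: "p b \<in> part L a1" "q b \<in> part L a2"
        using p[OF b] q[OF b] by blast
      have "(a1 \<noteq> a2) \<longleftrightarrow> b \<in> YS s"
        using delta_in_part_Aab[OF b] ext_pairing_part[OF w a] w_pq[OF b] by simp
      then show ?thesis
        using ext_pairing_part[OF f a] by (simp add: F_def)
    qed
    have F_brk: "brk M (F b) (F c) = 0" if b: "b \<in> ?B" and c: "c \<in> ?B" for b c
    proof -
      obtain a1 a2 where a: "p b \<in> part L a1" "q b \<in> part L a2"
        using p[OF b] q[OF b] by blast
      let ?u = "brk L (q b) (p b)" and ?v = "brk L (p c) (q c)"
      have uv: "?u \<in> car L" "?v \<in> car L"
        using lsa_brk_closed[OF L] pc qc b c by blast+
      have "- cscale (psign (a1 \<and> a2)) (w ?u ?v) = 0"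
        using ext_pairing_brk_pairing[OF w a pc[OF c] qc[OF c]] by (simp add: Aab_brk Aab_scl)
      then have "w ?u ?v = 0"
        by (auto simp: fun_eq_iff psign_def split: if_splits)
      then have "f ?u ?v = 0"
        using factor[OF M f uv] pc qc by (simp add: lsa_scl_zero_left[OF M] ext_pairing_closed[OF f])
      then show ?thesis
        using ext_pairing_brk_pairing[OF f a pc[OF c] qc[OF c]] by (simp add: F_def lsa_scl_zero_right[OF M])
    qed
    show hom: "lsa_hom (Aab r s) M (\<lambda>e. \<Sum>b\<in>?B. scl M (e b) (F b))"
      by (rule lsa_hom_from_Aab[OF M F_part F_brk])
    show "(\<Sum>b\<in>?B. scl M (w x y b) (F b)) = f x y" if "x \<in> car L" "y \<in> car L" for x y
      using factor[OF M f that] by (simp add: F_def)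
    fix \<psi> and e :: "idx \<Rightarrow> 'k"
    assume \<psi>: "lsa_hom (Aab r s) M \<psi> \<and> (\<forall>x\<in>car L. \<forall>y\<in>car L. \<psi> (w x y) = f x y)"
      and e: "e \<in> car (Aab r s)"
    have "\<psi> (delta b) = F b" if "b \<in> ?B" for b
      using \<psi> w_pq[OF that] pc[OF that] qc[OF that] by (metis F_def)
    then show "\<psi> e = (\<Sum>b\<in>?B. scl M (e b) (F b))"
      using lsa_hom_Aab_expand[OF conjunct1[OF \<psi>] e] by simp
  qed
  then show ?thesis
    unfolding is_ext_square_def using L lie_superalgebra_Aab w by blast
qed

section \<open>Exterior squares from a basis of pairs\<close>

text \<open>For c \<noteq> d, the coordinate of u \<and> v along c \<and> d also collects the (d, c)-coordinate of
  u \<otimes> v, with the sign relating d \<and> c to c \<and> d.\<close>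

definition swap_sign :: "bool \<Rightarrow> bool \<Rightarrow> 'k::ring_1" where
  "swap_sign p q = - psign (p \<and> q)"

definition wedge_coord :: "(idx \<Rightarrow> bool) \<Rightarrow> idx \<times> idx \<Rightarrow> (idx \<Rightarrow> 'k::field) \<Rightarrow> (idx \<Rightarrow> 'k) \<Rightarrow> 'k" where
  "wedge_coord par cd u v = u (fst cd) * v (snd cd) +
     (if fst cd = snd cd then 0 else swap_sign (par (fst cd)) (par (snd cd)) * u (snd cd) * v (fst cd))"

lemma wedge_coord_add_left: "wedge_coord par cd (x + x') y = wedge_coord par cd x y + wedge_coord par cd x' y"
  and wedge_coord_add_right: "wedge_coord par cd x (y + y') = wedge_coord par cd x y + wedge_coord par cd x y'"
  and wedge_coord_scl_left: "wedge_coord par cd (cscale c x) y = c * wedge_coord par cd x y"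
  and wedge_coord_scl_right: "wedge_coord par cd x (cscale c y) = c * wedge_coord par cd x y"
  by (simp_all add: wedge_coord_def algebra_simps)

lemma wedge_coord_delta:
  "wedge_coord par (c, d) (delta a) (delta b) =
    (if (c, d) = (a, b) then 1 else 0) + (if c \<noteq> d \<and> (c, d) = (b, a) then swap_sign (par c) (par d) else 0)"
  unfolding wedge_coord_def delta_def fst_conv snd_conv
  by (cases "c = a"; cases "d = b"; cases "c = d"; cases "d = a"; cases "c = b") simp_all

text \<open>The basis of L \<and> L is indexed by a set PE of pairs of basis vectors of L of equal parity
  and a set PO of pairs of different parity, enumerated by g and h. Each unordered pair occurs at
  most once, and a pair (a, a) only for odd a, since a \<and> a = 0 for even a.\<close>

locale pair_basis =
  fixes L :: "('k::field, idx \<Rightarrow> 'k) lsa" and S :: "idx set" and par :: "idx \<Rightarrow> bool"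
    and PE PO :: "(idx \<times> idx) set" and g h :: "nat \<Rightarrow> idx \<times> idx" and r s :: nat
  assumes lsa: "lie_superalgebra L"
    and car_L: "car L = supp_in S" and finite_S: "finite S"
    and evp_L: "evp L = supp_in {a\<in>S. \<not> par a}" and odp_L: "odp L = supp_in {a\<in>S. par a}"
    and scl_L: "scl L = cscale"
    and bij_g: "bij_betw g {1..r} PE" and bij_h: "bij_betw h {1..s} PO"
    and pairs_in_S: "\<And>a b. (a, b) \<in> PE \<union> PO \<Longrightarrow> a \<in> S \<and> b \<in> S"
    and PE_par: "\<And>a b. (a, b) \<in> PE \<Longrightarrow> par a = par b"
    and PO_par: "\<And>a b. (a, b) \<in> PO \<Longrightarrow> par a \<noteq> par b"
    and diag_odd: "\<And>a. (a, a) \<in> PE \<union> PO \<Longrightarrow> par a"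
    and unordered: "\<And>a b. (a, b) \<in> PE \<union> PO \<Longrightarrow> (b, a) \<in> PE \<union> PO \<Longrightarrow> a = b"
begin

abbreviation "B \<equiv> XS r \<union> YS s"
abbreviation "P \<equiv> PE \<union> PO"

definition pair_of :: "idx \<Rightarrow> idx \<times> idx" where
  "pair_of k = (case k of X i \<Rightarrow> g i | Y j \<Rightarrow> h j | Z \<Rightarrow> undefined)"

definition wedge :: "(idx \<Rightarrow> 'k) \<Rightarrow> (idx \<Rightarrow> 'k) \<Rightarrow> idx \<Rightarrow> 'k" where
  "wedge u v k = (if k \<in> B then wedge_coord par (pair_of k) u v else 0)"

lemma pair_of_X [simp]: "pair_of (X i) = g i"
  and pair_of_Y [simp]: "pair_of (Y j) = h j"
  by (simp_all add: pair_of_def)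

lemma pair_of_XS: "k \<in> XS r \<Longrightarrow> pair_of k \<in> PE"
  using bij_betw_apply[OF bij_g] by (auto simp: XS_def)

lemma pair_of_YS: "k \<in> YS s \<Longrightarrow> pair_of k \<in> PO"
  using bij_betw_apply[OF bij_h] by (auto simp: YS_def)

lemma bij_pair_of: "bij_betw pair_of B P"
proof -
  have "bij_betw X {1..r} (XS r)" "bij_betw Y {1..s} (YS s)"
    by (simp_all add: XS_def YS_def bij_betw_def inj_on_def)
  moreover have "pair_of \<circ> X = g" "pair_of \<circ> Y = h"
    by (simp_all add: fun_eq_iff)
  ultimately have "bij_betw pair_of (XS r) PE" "bij_betw pair_of (YS s) PO"
    using bij_g bij_h by (simp_all add: bij_betw_comp_iff)
  moreover have "PE \<inter> PO = {}"
    using PE_par PO_par by (auto simp: disjoint_iff)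
  ultimately show ?thesis
    using XS_YS_disjoint by (intro bij_betw_combine)
qed

definition pair_index :: "idx \<times> idx \<Rightarrow> idx" where
  "pair_index = the_inv_into B pair_of"

lemma pair_index_in: "cd \<in> P \<Longrightarrow> pair_index cd \<in> B"
  unfolding pair_index_def using bij_pair_of by (metis bij_betw_def the_inv_into_into order_refl)

lemma pair_of_pair_index: "cd \<in> P \<Longrightarrow> pair_of (pair_index cd) = cd"
  unfolding pair_index_def using bij_pair_of by (metis bij_betw_def f_the_inv_into_f)

lemma pair_index_pair_of: "k \<in> B \<Longrightarrow> pair_index (pair_of k) = k"
  unfolding pair_index_def using bij_pair_of by (metis bij_betw_def the_inv_into_f_f)

lemma pair_of_in: "k \<in> B \<Longrightarrow> pair_of k \<in> P"
  using bij_pair_of by (metis bij_betw_def imageI)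

lemma pair_of_eq_iff: "k \<in> B \<Longrightarrow> cd \<in> P \<Longrightarrow> pair_of k = cd \<longleftrightarrow> k = pair_index cd"
  using pair_of_pair_index pair_index_pair_of by metis

lemma wedge_add_left: "wedge (x + x') y = wedge x y + wedge x' y"
  and wedge_add_right: "wedge x (y + y') = wedge x y + wedge x y'"
  and wedge_scl_left: "wedge (cscale c x) y = cscale c (wedge x y)"
  and wedge_scl_right: "wedge x (cscale c y) = cscale c (wedge x y)"
  and wedge_closed: "wedge x y \<in> supp_in B"
  by (auto simp: fun_eq_iff wedge_def supp_in_iff wedge_coord_add_left wedge_coord_add_right
      wedge_coord_scl_left wedge_coord_scl_right)

lemma wedge_eqI:
  assumes "\<And>cd. cd \<in> P \<Longrightarrow> wedge_coord par cd u1 v1 = c2 * wedge_coord par cd u2 v2 - c3 * wedge_coord par cd u3 v3"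
  shows "wedge u1 v1 = cscale c2 (wedge u2 v2) - cscale c3 (wedge u3 v3)"
  using assms pair_of_in by (auto simp: fun_eq_iff wedge_def)

lemma wedge_eq_0I:
  assumes "\<And>cd. cd \<in> P \<Longrightarrow> wedge_coord par cd u v = 0"
  shows "wedge u v = 0"
  using assms pair_of_in by (auto simp: fun_eq_iff wedge_def)

lemma part_coord_nonzero: "x \<in> part L d \<Longrightarrow> x c \<noteq> 0 \<Longrightarrow> c \<in> S \<and> par c = d"
  by (cases d) (auto simp: part_def evp_L odp_L supp_in_iff)

lemma part_prod_nonzero:
  "x \<in> part L a \<Longrightarrow> y \<in> part L b \<Longrightarrow> x c * y d \<noteq> 0 \<Longrightarrow> par c = a \<and> par d = b"
  using part_coord_nonzero by (metis mult_zero_left mult_zero_right)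

lemma delta_in_part: "a \<in> S \<Longrightarrow> delta a \<in> part L (par a)"
  by (cases "par a") (auto simp: part_def evp_L odp_L intro: delta_in_supp_in)

lemma delta_in_car: "a \<in> S \<Longrightarrow> delta a \<in> car L"
  by (simp add: car_L delta_in_supp_in)

lemma wedge_coord_parity:
  assumes x: "x \<in> part L a" and y: "y \<in> part L b"
    and "\<not> (par c = a \<and> par d = b)" "\<not> (par d = a \<and> par c = b)"
  shows "wedge_coord par (c, d) x y = 0"
proof -
  have "x c * y d = 0" "x d * y c = 0"
    using part_prod_nonzero[OF x y] assms(3,4) by blast+
  moreover have "wedge_coord par (c, d) x y
      = x c * y d + (if c = d then 0 else swap_sign (par c) (par d) * (x d * y c))"
    by (simp add: wedge_coord_def mult.assoc)
  ultimately show ?thesis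
    by (simp only: mult_zero_right add_0_left if_cancel)
qed

lemma wedge_coord_swap:
  assumes x: "x \<in> part L a" and y: "y \<in> part L b" and cd: "(c, d) \<in> P"
  shows "wedge_coord par (c, d) x y + psign (a \<and> b) * wedge_coord par (c, d) y x = 0"
proof (cases "c = d")
  case True
  have "x c * y c = 0 \<or> (a \<and> b)"
    using part_prod_nonzero[OF x y, of c c] diag_odd cd True by blast
  then show ?thesis
    using True by (auto simp: wedge_coord_def psign_def algebra_simps)
next
  case False
  have "wedge_coord par (c, d) x y + psign (a \<and> b) * wedge_coord par (c, d) y x
      = x c * y d * (1 + psign (a \<and> b) * swap_sign (par c) (par d))
        + x d * y c * (swap_sign (par c) (par d) + psign (a \<and> b))"
    using False by (simp add: wedge_coord_def algebra_simps)
  moreover have "x c * y d * (1 + psign (a \<and> b) * swap_sign (par c) (par d)) = 0"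
    using part_prod_nonzero[OF x y, of c d] by (cases "x c * y d = 0") (auto simp: swap_sign_def psign_def)
  moreover have "x d * y c * (swap_sign (par c) (par d) + psign (a \<and> b)) = 0"
    using part_prod_nonzero[OF x y, of d c] by (cases "x d * y c = 0") (auto simp: swap_sign_def psign_def)
  ultimately show ?thesis
    by simp
qed

lemma wedge_coord_diag:
  assumes x: "x \<in> evp L" and cd: "(c, d) \<in> P"
  shows "wedge_coord par (c, d) x x = 0"
proof -
  have xp: "x \<in> part L False"
    using x by (simp add: part_def)
  show ?thesis
  proof (cases "c = d")
    case True
    then have "x c = 0"
      using part_coord_nonzero[OF xp, of c] diag_odd cd by blast
    then show ?thesis
      using True by (simp add: wedge_coord_def)
  next
    case False
    have "x c * x d * (1 + swap_sign (par c) (par d)) = 0"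
      using part_prod_nonzero[OF xp xp, of c d] by (cases "x c * x d = 0") (auto simp: swap_sign_def)
    then show ?thesis
      using False by (simp add: wedge_coord_def algebra_simps)
  qed
qed

lemma wedge_part:
  assumes x: "x \<in> part L a" and y: "y \<in> part L b"
  shows "wedge x y \<in> part (Aab r s) (a \<noteq> b)"
proof -
  have "wedge x y k = 0" if "k \<in> B" "(k \<in> YS s) \<noteq> (a \<noteq> b)" for k
  proof -
    obtain c d where cd: "pair_of k = (c, d)"
      by fastforce
    have "par c = par d \<longleftrightarrow> k \<in> XS r"
      using that(1) cd pair_of_XS pair_of_YS PE_par PO_par XS_YS_disjoint by fastforce
    then have "wedge_coord par (c, d) x y = 0"
      using that XS_YS_disjoint by (intro wedge_coord_parity[OF x y]) auto
    then show ?thesis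
      using that(1) cd by (simp add: wedge_def)
  qed
  then show ?thesis
    by (auto simp: part_def Aab_evp Aab_odp supp_in_iff wedge_def)
qed

lemma wedge_swap:
  assumes "x \<in> part L a" "y \<in> part L b"
  shows "wedge x y + cscale (psign (a \<and> b)) (wedge y x) = 0"
proof
  fix k
  show "(wedge x y + cscale (psign (a \<and> b)) (wedge y x)) k = 0 k"
    using wedge_coord_swap[OF assms, of "fst (pair_of k)" "snd (pair_of k)"] pair_of_in[of k]
    by (simp add: wedge_def)
qed

lemma wedge_diag:
  assumes "x \<in> evp L"
  shows "wedge x x = 0"
proof
  fix k
  show "wedge x x k = 0 k"
    using wedge_coord_diag[OF assms, of "fst (pair_of k)" "snd (pair_of k)"] pair_of_in[of k]
    by (simp add: wedge_def)
qed

lemma wedge_delta_pair: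
  assumes ab: "(a, b) \<in> P"
  shows "wedge (delta a) (delta b) = delta (pair_index (a, b))"
proof
  fix k
  show "wedge (delta a) (delta b) k = delta (pair_index (a, b)) k"
  proof (cases "k \<in> B")
    case True
    obtain c d where cd: "pair_of k = (c, d)"
      by fastforce
    have "\<not> (c \<noteq> d \<and> (c, d) = (b, a))"
      using unordered ab pair_of_in[OF True] cd by auto
    then have "wedge_coord par (c, d) (delta a) (delta b) = (if (c, d) = (a, b) then 1 else 0)"
      by (auto simp: wedge_coord_delta)
    moreover have "(c, d) = (a, b) \<longleftrightarrow> k = pair_index (a, b)"
      using pair_of_eq_iff[OF True ab] cd by simp
    ultimately show ?thesis
      using True cd by (simp add: wedge_def delta_def eq_commute)
  next
    case False
    then show ?thesis
      using pair_index_in[OF ab] by (auto simp: wedge_def delta_def)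
  qed
qed

lemma wedge_delta_swapped_pair:
  assumes ba: "(b, a) \<in> P" and "a \<noteq> b"
  shows "wedge (delta a) (delta b) = cscale (swap_sign (par b) (par a)) (delta (pair_index (b, a)))"
proof
  fix k
  show "wedge (delta a) (delta b) k = cscale (swap_sign (par b) (par a)) (delta (pair_index (b, a))) k"
  proof (cases "k \<in> B")
    case True
    obtain c d where cd: "pair_of k = (c, d)"
      by fastforce
    have ab: "(c, d) \<noteq> (a, b)"
      using unordered ba pair_of_in[OF True] cd \<open>a \<noteq> b\<close> by auto
    have "wedge_coord par (c, d) (delta a) (delta b)
        = (if (c, d) = (b, a) then swap_sign (par b) (par a) else 0)"
    proof (cases "(c, d) = (b, a)")
      case True
      then show ?thesis
        using \<open>a \<noteq> b\<close> ab by (simp add: wedge_coord_delta)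
    next
      case False
      then show ?thesis
        using ab by (simp only: wedge_coord_delta if_False) simp
    qed
    moreover have "(c, d) = (b, a) \<longleftrightarrow> k = pair_index (b, a)"
      using pair_of_eq_iff[OF True ba] cd by simp
    ultimately have "wedge (delta a) (delta b) k = (if k = pair_index (b, a) then swap_sign (par b) (par a) else 0)"
      using True cd by (simp add: wedge_def)
    then show ?thesis
      by (simp add: delta_def)
  next
    case False
    then show ?thesis
      using pair_index_in[OF ba] by (auto simp: wedge_def delta_def)
  qed
qed

lemma wedge_delta_no_pair:
  assumes "(a, b) \<notin> P" "(b, a) \<notin> P"
  shows "wedge (delta a) (delta b) = 0"
proof
  fix k
  show "wedge (delta a) (delta b) k = 0 k"
  proof (cases "k \<in> B")
    case True
    obtain c d where cd: "pair_of k = (c, d)"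
      by fastforce
    then have "(c, d) \<noteq> (a, b)" "(c, d) \<noteq> (b, a)"
      using assms pair_of_in[OF True] by auto
    then have "wedge_coord par (c, d) (delta a) (delta b) = 0"
      by (simp only: wedge_coord_delta if_False) simp
    then show ?thesis
      using True cd by (simp add: wedge_def)
  qed (simp add: wedge_def)
qed

lemma bilinear_on_wedge: "bilinear_on L (Aab r s) wedge"
  by (simp add: bilinear_on_def Aab_car Aab_scl scl_L wedge_closed wedge_add_left wedge_add_right
      wedge_scl_left wedge_scl_right)

lemma ext_pairing_wedgeI:
  assumes brk_left: "\<And>a b x x' y. x \<in> part L a \<Longrightarrow> x' \<in> part L b \<Longrightarrow> y \<in> car L \<Longrightarrow>
        wedge (brk L x x') y = wedge x (brk L x' y) - cscale (psign (a \<and> b)) (wedge x' (brk L x y))"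
    and brk_right: "\<And>a b c x y y'. x \<in> part L a \<Longrightarrow> y \<in> part L b \<Longrightarrow> y' \<in> part L c \<Longrightarrow>
        wedge x (brk L y y') = cscale (psign (c \<and> (a \<noteq> b))) (wedge (brk L y' x) y)
                             - cscale (psign (a \<and> b)) (wedge (brk L y x) y')"
    and brk_brk: "\<And>u v u' v'. wedge (brk L u v) (brk L u' v') = 0"
  shows "ext_pairing L (Aab r s) wedge"
  using bilinear_on_wedge wedge_part wedge_swap wedge_diag brk_left brk_right
  unfolding ext_pairing_def bilinear_on_def Aab_scl Aab_brk
  by (simp add: brk_brk cscale_simps)

lemma ext_pairing_eq_wedge_sum:
  fixes M :: "('k, 'm::ab_group_add) lsa"
  assumes M: "lie_superalgebra M" and f: "ext_pairing L M f"
    and vanish: "\<And>a b. a \<in> S \<Longrightarrow> b \<in> S \<Longrightarrow> (a, b) \<notin> P \<Longrightarrow> (b, a) \<notin> P \<Longrightarrow> f (delta a) (delta b) = 0"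
    and x: "x \<in> car L" and y: "y \<in> car L"
  shows "f x y = (\<Sum>k\<in>B. scl M (wedge x y k) (f (delta (fst (pair_of k))) (delta (snd (pair_of k)))))"
proof -
  define F where "F k = f (delta (fst (pair_of k))) (delta (snd (pair_of k)))" for k
  have F_pair: "F (pair_index (a, b)) = f (delta a) (delta b)" if "(a, b) \<in> P" for a b
    using pair_of_pair_index[OF that] by (simp add: F_def)
  have Fc: "F k \<in> car M" if "k \<in> B" for k
    using pair_of_in[OF that] pairs_in_S ext_pairing_closed[OF f] delta_in_car
    by (simp add: F_def) (metis prod.collapse)
  have sum_delta: "(\<Sum>k\<in>B. scl M (c * delta i k) (F k)) = scl M c (F i)" if "i \<in> B" for c i
  proof -
    have "(\<Sum>k\<in>B. scl M (c * delta i k) (F k)) = (\<Sum>k\<in>B. if k = i then scl M c (F k) else 0)"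
      using Fc by (intro sum.cong refl) (auto simp: delta_def lsa_scl_zero_left[OF M])
    then show ?thesis
      using that by simp
  qed
  have "f x y = (\<Sum>k\<in>B. scl M (wedge x y k) (F k))"
  proof (rule bilinear_on_eq_on_delta[OF M ext_pairing_bilinear_on[OF f]
        bilinear_on_coord_comb[OF M bilinear_on_wedge Aab_scl Fc] car_L finite_S scl_L _ x y])
    fix a b assume a: "a \<in> S" and b: "b \<in> S"
    consider "(a, b) \<in> P" | "(b, a) \<in> P" "a \<noteq> b" | "(a, b) \<notin> P" "(b, a) \<notin> P"
      by auto
    then show "f (delta a) (delta b) = (\<Sum>k\<in>B. scl M (wedge (delta a) (delta b) k) (F k))"
    proof cases
      case 1
      then show ?thesis
        using sum_delta[OF pair_index_in[OF 1], of 1] Fc[OF pair_index_in[OF 1]]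
        by (simp add: wedge_delta_pair F_pair lsa_scl_one[OF M])
    next
      case 2
      have "f (delta a) (delta b) = - scl M (psign (par a \<and> par b)) (f (delta b) (delta a))"
        using ext_pairing_swap[OF f delta_in_part[OF a] delta_in_part[OF b]] by (simp add: eq_neg_iff_add_eq_0)
      also have "\<dots> = scl M (swap_sign (par b) (par a)) (F (pair_index (b, a)))"
        using lsa_scl_minus[OF M ext_pairing_closed[OF f delta_in_car[OF b] delta_in_car[OF a]]]
        by (simp add: swap_sign_def F_pair[OF 2(1)] conj_commute)
      finally show ?thesis
        using sum_delta[OF pair_index_in[OF 2(1)]] by (simp add: wedge_delta_swapped_pair[OF 2])
    next
      case 3
      then show ?thesis
        using vanish[OF a b 3] Fc by (simp add: wedge_delta_no_pair lsa_scl_zero_left[OF M])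
    qed
  qed
  then show ?thesis
    by (simp add: F_def)
qed

theorem is_ext_square_pair_basis:
  assumes "ext_pairing L (Aab r s) wedge"
    and vanish: "\<And>(M::('k, 'm::ab_group_add) lsa) f a b. lie_superalgebra M \<Longrightarrow> ext_pairing L M f \<Longrightarrow>
        a \<in> S \<Longrightarrow> b \<in> S \<Longrightarrow> (a, b) \<notin> P \<Longrightarrow> (b, a) \<notin> P \<Longrightarrow> f (delta a) (delta b) = 0"
  shows "is_ext_square L (Aab r s) TYPE('m)"
proof (rule is_ext_square_AabI[OF lsa assms(1)])
  fix k assume k: "k \<in> B"
  then have "fst (pair_of k) \<in> S" "snd (pair_of k) \<in> S"
    using pairs_in_S pair_of_in by (metis prod.collapse)+
  then show "\<exists>a. delta (fst (pair_of k)) \<in> part L a" "\<exists>a. delta (snd (pair_of k)) \<in> part L a"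
    using delta_in_part by blast+
  show "wedge (delta (fst (pair_of k))) (delta (snd (pair_of k))) = delta k"
    using wedge_delta_pair[of "fst (pair_of k)" "snd (pair_of k)"] pair_of_in[OF k]
      pair_index_pair_of[OF k] by simp
qed (use ext_pairing_eq_wedge_sum vanish in blast)

text \<open>Every relation of an exterior pairing that involves a bracket then holds with both sides
  zero.\<close>

theorem is_ext_square_pair_basis_central:
  assumes no_Z: "\<And>c d. (c, d) \<in> P \<Longrightarrow> c \<noteq> Z \<and> d \<noteq> Z"
    and brk_Z: "\<And>u v i. i \<noteq> Z \<Longrightarrow> brk L u v i = 0"
    and vanish: "\<And>(M::('k, 'm::ab_group_add) lsa) f a b. lie_superalgebra M \<Longrightarrow> ext_pairing L M f \<Longrightarrow>
        a \<in> S \<Longrightarrow> b \<in> S \<Longrightarrow> (a, b) \<notin> P \<Longrightarrow> (b, a) \<notin> P \<Longrightarrow> f (delta a) (delta b) = 0"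
  shows "is_ext_square L (Aab r s) TYPE('m)"
proof (rule is_ext_square_pair_basis)
  have Z: "fst cd \<noteq> Z" "snd cd \<noteq> Z" if "cd \<in> P" for cd
    using no_Z[of "fst cd" "snd cd"] that by simp_all
  have "wedge (brk L u v) y = 0" "wedge y (brk L u v) = 0" for u v y
    by (rule wedge_eq_0I, simp add: wedge_coord_def brk_Z Z)+
  then show "ext_pairing L (Aab r s) wedge"
    by (intro ext_pairing_wedgeI) (simp_all add: cscale_simps)
qed (fact vanish)

end

section \<open>Heisenberg superalgebras\<close>

lemma lie_superalgebra_centralI:
  fixes L :: "('k::field, idx \<Rightarrow> 'k) lsa" and Q :: "(idx \<Rightarrow> 'k) \<Rightarrow> (idx \<Rightarrow> 'k) \<Rightarrow> 'k"
  assumes car_L: "car L = supp_in S" and Z: "Z \<in> S"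
    and evp_L: "evp L = supp_in {a\<in>S. \<not> par a}" and odp_L: "odp L = supp_in {a\<in>S. par a}"
    and scl_L: "scl L = cscale"
    and brk_L: "brk L = (\<lambda>u v i. if i = Z then Q u v else 0)"
    and Q_add_left: "\<And>x x' y. Q (x + x') y = Q x y + Q x' y"
    and Q_add_right: "\<And>x y y'. Q x (y + y') = Q x y + Q x y'"
    and Q_scl_left: "\<And>c x y. Q (cscale c x) y = c * Q x y"
    and Q_scl_right: "\<And>c x y. Q x (cscale c y) = c * Q x y"
    and Q_parity: "\<And>a b x y. x \<in> part L a \<Longrightarrow> y \<in> part L b \<Longrightarrow> (a \<noteq> b) \<noteq> par Z \<Longrightarrow> Q x y = 0"
    and Q_swap: "\<And>a b x y. x \<in> part L a \<Longrightarrow> y \<in> part L b \<Longrightarrow> Q x y = - (psign (a \<and> b) * Q y x)"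
    and Q_central: "\<And>u v. (\<And>i. i \<noteq> Z \<Longrightarrow> v i = 0) \<Longrightarrow> Q u v = 0"
  shows "lie_superalgebra L"
proof -
  have disj: "{a\<in>S. \<not> par a} \<inter> {a\<in>S. par a} = {}" and un: "{a\<in>S. \<not> par a} \<union> {a\<in>S. par a} = S"
    by auto
  have brk_part: "brk L u v \<in> part L (par Z)" for u v
    using Z by (cases "par Z") (auto simp: brk_L supp_in_iff part_def evp_L odp_L)
  have brk_brk: "brk L x (brk L y z) = 0" for x y z
    using Q_central by (simp add: brk_L fun_eq_iff)
  show ?thesis
    unfolding lie_superalgebra_def
  proof (intro conjI)
    show "lsubspace L (car L)" "lsubspace L (evp L)" "lsubspace L (odp L)"
      unfolding car_L evp_L odp_L by (rule lsubspace_supp_in[OF scl_L])+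
    show "evp L \<subseteq> car L" "odp L \<subseteq> car L"
      unfolding car_L evp_L odp_L by (rule supp_in_mono; blast)+
    show "evp L \<inter> odp L = {0}"
      unfolding evp_L odp_L by (rule supp_in_disjoint[OF disj])
    show "\<forall>x\<in>car L. \<exists>u\<in>evp L. \<exists>v\<in>odp L. x = u + v"
      unfolding car_L evp_L odp_L using supp_in_Un_split[OF disj] unfolding un by blast
    show "\<forall>a b. \<forall>x\<in>part L a. \<forall>y\<in>part L b. brk L x y \<in> part L (a \<noteq> b)"
    proof (intro allI ballI)
      fix a b x y assume x: "x \<in> part L a" and y: "y \<in> part L b"
      show "brk L x y \<in> part L (a \<noteq> b)"
      proof (cases "(a \<noteq> b) = par Z")
        case True
        then show ?thesis using brk_part by simp
      next
        case False
        then have "brk L x y = 0"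
          using Q_parity[OF x y] by (simp add: brk_L fun_eq_iff)
        then show ?thesis
          by (simp add: part_def evp_L odp_L)
      qed
    qed
    show "\<forall>a b. \<forall>x\<in>part L a. \<forall>y\<in>part L b. brk L x y = - scl L (psign (a \<and> b)) (brk L y x)"
    proof (intro allI ballI ext)
      fix a b x y i assume x: "x \<in> part L a" and y: "y \<in> part L b"
      show "brk L x y i = (- scl L (psign (a \<and> b)) (brk L y x)) i"
        using Q_swap[OF x y] by (simp add: brk_L scl_L)
    qed
    show "\<forall>a. \<forall>x\<in>car L. \<forall>y\<in>car L. scl L a (x + y) = scl L a x + scl L a y"
      "\<forall>a b. \<forall>x\<in>car L. scl L (a + b) x = scl L a x + scl L b x"
      "\<forall>a b. \<forall>x\<in>car L. scl L a (scl L b x) = scl L (a * b) x"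
      "\<forall>x\<in>car L. scl L 1 x = x"
      by (simp_all add: scl_L cscale_simps)
    show "\<forall>x\<in>car L. \<forall>y\<in>car L. brk L x y \<in> car L"
      using Z by (simp add: car_L brk_L supp_in_iff)
    show "\<forall>x\<in>car L. \<forall>x'\<in>car L. \<forall>y\<in>car L. brk L (x + x') y = brk L x y + brk L x' y"
      "\<forall>x\<in>car L. \<forall>y\<in>car L. \<forall>y'\<in>car L. brk L x (y + y') = brk L x y + brk L x y'"
      "\<forall>c. \<forall>x\<in>car L. \<forall>y\<in>car L. brk L (scl L c x) y = scl L c (brk L x y)"
      "\<forall>c. \<forall>x\<in>car L. \<forall>y\<in>car L. brk L x (scl L c y) = scl L c (brk L x y)"
      by (simp_all add: brk_L scl_L fun_eq_iff Q_add_left Q_add_right Q_scl_left Q_scl_right)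
    show "\<forall>a b c. \<forall>x\<in>part L a. \<forall>y\<in>part L b. \<forall>z\<in>part L c.
        scl L (psign (a \<and> c)) (brk L x (brk L y z)) + scl L (psign (b \<and> a)) (brk L y (brk L z x))
      + scl L (psign (c \<and> b)) (brk L z (brk L x y)) = 0"
      by (simp add: brk_brk scl_L cscale_simps)
  qed
qed

fun idx_parity :: "bool \<Rightarrow> idx \<Rightarrow> bool" where
  "idx_parity zp (X _) = False"
| "idx_parity zp (Y _) = True"
| "idx_parity zp Z = zp"

definition heis_support :: "nat \<Rightarrow> nat \<Rightarrow> idx set" where
  "heis_support p q = XS p \<union> YS q \<union> {Z}"

lemma finite_heis_support [simp]: "finite (heis_support p q)"
  by (simp add: heis_support_def)

lemma heis_support_even: "{a \<in> heis_support p q. \<not> idx_parity zp a} = XS p \<union> (if zp then {} else {Z})"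
  and heis_support_odd: "{a \<in> heis_support p q. idx_parity zp a} = YS q \<union> (if zp then {Z} else {})"
  by (auto simp: heis_support_def XS_def YS_def)

definition Hmn_form :: "nat \<Rightarrow> nat \<Rightarrow> (idx \<Rightarrow> 'k::field) \<Rightarrow> (idx \<Rightarrow> 'k) \<Rightarrow> 'k" where
  "Hmn_form m n u v = (\<Sum>k=1..m. u (X k) * v (X (m + k)) - u (X (m + k)) * v (X k))
     + (\<Sum>j=1..n. u (Y j) * v (Y j))"

definition Hm_form :: "nat \<Rightarrow> (idx \<Rightarrow> 'k::field) \<Rightarrow> (idx \<Rightarrow> 'k) \<Rightarrow> 'k" where
  "Hm_form m u v = (\<Sum>j=1..m. u (X j) * v (Y j) - u (Y j) * v (X j))"

lemma Hmn_car: "car (Hmn m n) = supp_in (heis_support (2 * m) n)"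
  and Hmn_evp: "evp (Hmn m n) = supp_in {a \<in> heis_support (2 * m) n. \<not> idx_parity False a}"
  and Hmn_odp: "odp (Hmn m n) = supp_in {a \<in> heis_support (2 * m) n. idx_parity False a}"
  and Hmn_scl: "scl (Hmn m n) = cscale"
  and Hmn_brk: "brk (Hmn m n) = (\<lambda>u v i. if i = Z then Hmn_form m n u v else 0)"
  unfolding Hmn_def Hmn_form_def XS_Collect YS_Collect heis_support_even heis_support_odd
  by (simp_all add: heis_support_def Un_ac)

lemma Hm_car: "car (Hm m) = supp_in (heis_support m m)"
  and Hm_evp: "evp (Hm m) = supp_in {a \<in> heis_support m m. \<not> idx_parity True a}"
  and Hm_odp: "odp (Hm m) = supp_in {a \<in> heis_support m m. idx_parity True a}"
  and Hm_scl: "scl (Hm m) = cscale"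
  and Hm_brk: "brk (Hm m) = (\<lambda>u v i. if i = Z then Hm_form m u v else 0)"
  unfolding Hm_def Hm_form_def XS_Collect YS_Collect heis_support_even heis_support_odd
  by (simp_all add: heis_support_def Un_ac)

lemma Hmn_part_coord: "x \<in> part (Hmn m n) a \<Longrightarrow> idx_parity False i \<noteq> a \<Longrightarrow> x i = 0"
  by (cases a) (auto simp: part_def Hmn_evp Hmn_odp supp_in_iff)

lemma Hm_part_coord: "x \<in> part (Hm m) a \<Longrightarrow> idx_parity True i \<noteq> a \<Longrightarrow> x i = 0"
  by (cases a) (auto simp: part_def Hm_evp Hm_odp supp_in_iff)

lemma lie_superalgebra_Hmn: "lie_superalgebra (Hmn m n :: ('k::field, idx \<Rightarrow> 'k) lsa)"
proof (rule lie_superalgebra_centralI[OF Hmn_car _ Hmn_evp Hmn_odp Hmn_scl Hmn_brk])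
  fix a b and x y :: "idx \<Rightarrow> 'k"
  assume x: "x \<in> part (Hmn m n) a" and y: "y \<in> part (Hmn m n) b"
  note coords = Hmn_part_coord[OF x] Hmn_part_coord[OF y]
  show "Hmn_form m n x y = 0" if "(a \<noteq> b) \<noteq> idx_parity False Z"
    using that coords by (cases a) (auto simp: Hmn_form_def intro!: sum.neutral)
  have X_swap: "(\<Sum>k=1..m. x (X k) * y (X (m + k)) - x (X (m + k)) * y (X k))
      = - (\<Sum>k=1..m. y (X k) * x (X (m + k)) - y (X (m + k)) * x (X k))"
    by (simp add: sum_negf[symmetric] algebra_simps)
  show "Hmn_form m n x y = - (psign (a \<and> b) * Hmn_form m n y x)"
    using coords X_swap by (cases "a \<and> b") (auto simp: Hmn_form_def mult.commute intro!: sum.neutral)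
qed (simp_all add: heis_support_def Hmn_form_def algebra_simps sum.distrib sum_subtractf sum_distrib_left)

lemma lie_superalgebra_Hm: "lie_superalgebra (Hm m :: ('k::field, idx \<Rightarrow> 'k) lsa)"
proof (rule lie_superalgebra_centralI[OF Hm_car _ Hm_evp Hm_odp Hm_scl Hm_brk])
  fix a b and x y :: "idx \<Rightarrow> 'k"
  assume x: "x \<in> part (Hm m) a" and y: "y \<in> part (Hm m) b"
  note coords = Hm_part_coord[OF x] Hm_part_coord[OF y]
  show "Hm_form m x y = 0" if "(a \<noteq> b) \<noteq> idx_parity True Z"
    using that coords by (cases a) (auto simp: Hm_form_def intro!: sum.neutral)
  have "Hm_form m x y = - Hm_form m y x"
    by (simp add: Hm_form_def sum_negf[symmetric] algebra_simps)
  then show "Hm_form m x y = - (psign (a \<and> b) * Hm_form m y x)"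
    using coords by (cases "a \<and> b") (auto simp: Hm_form_def intro!: sum.neutral)
qed (simp_all add: heis_support_def Hm_form_def algebra_simps sum.distrib sum_subtractf sum_distrib_left)

definition lt_pairs :: "nat \<Rightarrow> (nat \<times> nat) set" where
  "lt_pairs N = {(i, j). 1 \<le> i \<and> i < j \<and> j \<le> N}"

definition le_pairs :: "nat \<Rightarrow> (nat \<times> nat) set" where
  "le_pairs N = {(i, j). 1 \<le> i \<and> i \<le> j \<and> j \<le> N}"

lemma finite_lt_pairs: "finite (lt_pairs N)" and finite_le_pairs: "finite (le_pairs N)"
  by (rule finite_subset[of _ "{1..N} \<times> {1..N}"]; auto simp: lt_pairs_def le_pairs_def)+

lemma card_lt_pairs: "card (lt_pairs N) = N * (N - 1) div 2"
proof -
  have "2 * card (lt_pairs N) = N * (N - 1)"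
  proof (induction N)
    case 0
    have "lt_pairs 0 = {}"
      by (auto simp: lt_pairs_def)
    then show ?case
      by simp
  next
    case (Suc N)
    have "lt_pairs (Suc N) = lt_pairs N \<union> (\<lambda>i. (i, Suc N)) ` {1..N}"
      and "lt_pairs N \<inter> (\<lambda>i. (i, Suc N)) ` {1..N} = {}"
      by (auto simp: lt_pairs_def)
    then have "card (lt_pairs (Suc N)) = card (lt_pairs N) + N"
      using finite_lt_pairs by (simp add: card_Un_disjoint card_image inj_on_def)
    then show ?case
      using Suc.IH by (cases N) (simp_all add: algebra_simps)
  qed
  then show ?thesis
    by simp
qed

lemma card_le_pairs: "card (le_pairs N) = N * (N + 1) div 2"
proof -
  have "2 * card (le_pairs N) = N * (N + 1)"
  proof (induction N)
    case 0
    have "le_pairs 0 = {}"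
      by (auto simp: le_pairs_def)
    then show ?case
      by simp
  next
    case (Suc N)
    have "le_pairs (Suc N) = le_pairs N \<union> (\<lambda>i. (i, Suc N)) ` {1..Suc N}"
      and "le_pairs N \<inter> (\<lambda>i. (i, Suc N)) ` {1..Suc N} = {}"
      by (auto simp: le_pairs_def)
    then have "card (le_pairs (Suc N)) = card (le_pairs N) + Suc N"
      using finite_le_pairs by (simp add: card_Un_disjoint card_image inj_on_def)
    then show ?case
      using Suc.IH by (simp add: algebra_simps)
  qed
  then show ?thesis
    by simp
qed

text \<open>The standard basis of the exterior square of a Heisenberg superalgebra with even
  generators X 1, ..., X p and odd generators Y 1, ..., Y q: the wedges x_i \<and> x_j for i < j,
  y_i \<and> y_j for i \<le> j and x_i \<and> y_j; everything involving the central element Z vanishes.\<close>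

definition heis_even_pairs :: "nat \<Rightarrow> nat \<Rightarrow> (idx \<times> idx) set" where
  "heis_even_pairs p q = (\<lambda>(i, j). (X i, X j)) ` lt_pairs p \<union> (\<lambda>(i, j). (Y i, Y j)) ` le_pairs q"

definition heis_odd_pairs :: "nat \<Rightarrow> nat \<Rightarrow> (idx \<times> idx) set" where
  "heis_odd_pairs p q = (\<lambda>(i, j). (X i, Y j)) ` ({1..p} \<times> {1..q})"

lemma mem_heis_even_pairs:
  "(a, b) \<in> heis_even_pairs p q \<longleftrightarrow>
    (\<exists>i j. a = X i \<and> b = X j \<and> 1 \<le> i \<and> i < j \<and> j \<le> p) \<or>
    (\<exists>i j. a = Y i \<and> b = Y j \<and> 1 \<le> i \<and> i \<le> j \<and> j \<le> q)"
  by (auto simp: heis_even_pairs_def lt_pairs_def le_pairs_def)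

lemma mem_heis_odd_pairs:
  "(a, b) \<in> heis_odd_pairs p q \<longleftrightarrow> (\<exists>i j. a = X i \<and> b = Y j \<and> 1 \<le> i \<and> i \<le> p \<and> 1 \<le> j \<and> j \<le> q)"
  by (auto simp: heis_odd_pairs_def)

lemma card_heis_even_pairs: "card (heis_even_pairs p q) = p * (p - 1) div 2 + q * (q + 1) div 2"
proof -
  have "card ((\<lambda>(i, j). (X i, X j)) ` lt_pairs p) = card (lt_pairs p)"
    "card ((\<lambda>(i, j). (Y i, Y j)) ` le_pairs q) = card (le_pairs q)"
    by (auto intro!: card_image simp: inj_on_def)
  moreover have "(\<lambda>(i, j). (X i, X j)) ` lt_pairs p \<inter> (\<lambda>(i, j). (Y i, Y j)) ` le_pairs q = {}"
    by auto
  ultimately show ?thesis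
    unfolding heis_even_pairs_def
    by (simp add: card_Un_disjoint finite_lt_pairs finite_le_pairs card_lt_pairs card_le_pairs)
qed

lemma card_heis_odd_pairs: "card (heis_odd_pairs p q) = p * q"
  unfolding heis_odd_pairs_def by (subst card_image) (auto simp: inj_on_def)

lemma finite_heis_pairs: "finite (heis_even_pairs p q)" "finite (heis_odd_pairs p q)"
  by (simp_all add: heis_even_pairs_def heis_odd_pairs_def finite_lt_pairs finite_le_pairs)

lemma heis_unpaired:
  assumes "a \<in> heis_support p q" "b \<in> heis_support p q" "a \<noteq> Z" "b \<noteq> Z"
    and "(a, b) \<notin> heis_even_pairs p q \<union> heis_odd_pairs p q"
    and "(b, a) \<notin> heis_even_pairs p q \<union> heis_odd_pairs p q"
  shows "a = b \<and> a \<in> XS p"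
  using assms
  by (cases a; cases b) (auto simp: heis_support_def mem_heis_even_pairs mem_heis_odd_pairs linorder_neq_iff)

theorem is_ext_square_heis:
  fixes L :: "('k::field, idx \<Rightarrow> 'k) lsa"
  assumes L: "lie_superalgebra L"
    and car_L: "car L = supp_in (heis_support p q)"
    and evp_L: "evp L = supp_in {a \<in> heis_support p q. \<not> idx_parity zp a}"
    and odp_L: "odp L = supp_in {a \<in> heis_support p q. idx_parity zp a}"
    and scl_L: "scl L = cscale"
    and brk_Z: "\<And>u v i. i \<noteq> Z \<Longrightarrow> brk L u v i = 0"
    and Z_vanish: "\<And>(M::('k, 'm::ab_group_add) lsa) f c. lie_superalgebra M \<Longrightarrow> ext_pairing L M f \<Longrightarrow>
        c \<in> heis_support p q \<Longrightarrow> f (delta Z) (delta c) = 0"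
  shows "is_ext_square L (Aab (p * (p - 1) div 2 + q * (q + 1) div 2) (p * q)) TYPE('m)"
proof -
  let ?S = "heis_support p q" and ?PE = "heis_even_pairs p q" and ?PO = "heis_odd_pairs p q"
  obtain g where g: "bij_betw g {1..p * (p - 1) div 2 + q * (q + 1) div 2} ?PE"
    using ex_bij_betw_nat_finite_1[OF finite_heis_pairs(1)] card_heis_even_pairs by metis
  obtain h where h: "bij_betw h {1..p * q} ?PO"
    using ex_bij_betw_nat_finite_1[OF finite_heis_pairs(2)] card_heis_odd_pairs by metis
  interpret pair_basis L ?S "idx_parity zp" ?PE ?PO g h "p * (p - 1) div 2 + q * (q + 1) div 2" "p * q"
    using L car_L evp_L odp_L scl_L g h
    by unfold_locales (auto simp: heis_support_def mem_heis_even_pairs mem_heis_odd_pairs)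
  show ?thesis
  proof (rule is_ext_square_pair_basis_central)
    show "c \<noteq> Z \<and> d \<noteq> Z" if "(c, d) \<in> ?PE \<union> ?PO" for c d
      using that by (auto simp: mem_heis_even_pairs mem_heis_odd_pairs)
    fix M :: "('k, 'm) lsa" and f a b
    assume M: "lie_superalgebra M" and f: "ext_pairing L M f" and a: "a \<in> ?S" and b: "b \<in> ?S"
      and unpaired: "(a, b) \<notin> ?PE \<union> ?PO" "(b, a) \<notin> ?PE \<union> ?PO"
    consider "a = Z" | "b = Z" | "a \<noteq> Z" "b \<noteq> Z"
      by blast
    then show "f (delta a) (delta b) = 0"
    proof cases
      case 1
      then show ?thesis using Z_vanish[OF M f b] by simp
    next
      case 2
      then show ?thesis
        using Z_vanish[OF M f a] ext_pairing_swap[OF f delta_in_part[OF a] delta_in_part[OF b]]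
        by (simp add: lsa_scl_zero_right[OF M])
    next
      case 3
      then have "a = b" "a \<in> XS p"
        using heis_unpaired[OF a b _ _ unpaired] by auto
      moreover have "delta a \<in> evp L"
        unfolding evp_L using \<open>a \<in> XS p\<close> by (intro delta_in_supp_in) (auto simp: heis_support_def XS_def)
      ultimately show ?thesis
        using ext_pairing_diag[OF f] by simp
    qed
  qed (use brk_Z in auto)
qed

lemma ext_pairing_brk_eq_0:
  fixes M :: "('k::field, 'm::ab_group_add) lsa"
  assumes L: "lie_superalgebra L" and M: "lie_superalgebra M" and f: "ext_pairing L M f"
    and x: "x \<in> part L a" and x': "x' \<in> part L b" and y: "y \<in> car L"
    and "brk L x' y = 0" "brk L x y = 0"
  shows "f (brk L x x') y = 0"
proof -
  have "x \<in> car L" "x' \<in> car L"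
    using x x' lsa_part_subset[OF L] by blast+
  then show ?thesis
    using ext_pairing_brk_left[OF f x x' y] assms(7,8) lsa_scl_zero_right[OF M]
      bilinear_on_zero_right[OF ext_pairing_bilinear_on[OF f] lsa_lsubspace_car[OF L]]
    by simp
qed

lemma brk_central_eq:
  fixes L :: "('k::field, idx \<Rightarrow> 'k, 'z) lsa_scheme"
  shows "brk L = (\<lambda>u v i. if i = Z then Q u v else 0) \<Longrightarrow> brk L u v = cscale (Q u v) (delta Z)"
  by (simp add: fun_eq_iff delta_def)

lemma Hmn_form_delta_X: "1 \<le> k \<Longrightarrow> k \<le> m \<Longrightarrow> Hmn_form m n (delta (X k)) v = v (X (m + k))"
  and Hmn_form_delta_X_shift: "1 \<le> k \<Longrightarrow> k \<le> m \<Longrightarrow> Hmn_form m n (delta (X (m + k))) v = - v (X k)"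
  and Hmn_form_delta_Y: "1 \<le> j \<Longrightarrow> j \<le> n \<Longrightarrow> Hmn_form m n (delta (Y j)) v = v (Y j)"
  by (simp_all add: Hmn_form_def delta_def if_distrib if_distribR sum.If_cases Int_def Collect_conv_if)

lemma Hm_form_delta_X: "1 \<le> j \<Longrightarrow> j \<le> m \<Longrightarrow> Hm_form m (delta (X j)) v = v (Y j)"
  and Hm_form_delta_Y: "1 \<le> j \<Longrightarrow> j \<le> m \<Longrightarrow> Hm_form m (delta (Y j)) v = - v (X j)"
  by (simp_all add: Hm_form_def delta_def if_distrib if_distribR sum.If_cases Int_def Collect_conv_if)

lemma delta_in_part_Hmn: "a \<in> heis_support (2 * m) n \<Longrightarrow> delta a \<in> part (Hmn m n) (idx_parity False a)"
  by (cases "idx_parity False a") (auto simp: part_def Hmn_evp Hmn_odp intro: delta_in_supp_in)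

lemma delta_in_part_Hm: "a \<in> heis_support m m \<Longrightarrow> delta a \<in> part (Hm m) (idx_parity True a)"
  by (cases "idx_parity True a") (auto simp: part_def Hm_evp Hm_odp intro: delta_in_supp_in)

text \<open>In H(0,1), Z = [y, y] and the relations give f (Z, y) = 2 f (y, Z) = - f (y, Z).\<close>

lemma H01_ext_pairing_Z_vanish:
  fixes M :: "('k::field, 'm::ab_group_add) lsa"
  assumes three: "(3::'k) \<noteq> 0" and M: "lie_superalgebra M" and f: "ext_pairing (Hmn 0 1) M f"
  shows "f (delta Z) (delta (Y 1)) = 0"
proof -
  let ?L = "Hmn 0 1 :: ('k, idx \<Rightarrow> 'k) lsa"
  let ?y = "delta (Y 1) :: idx \<Rightarrow> 'k" and ?z = "delta Z :: idx \<Rightarrow> 'k"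
  have y: "?y \<in> part ?L True" and z: "?z \<in> part ?L False"
    using delta_in_part_Hmn[of "Y 1" 0 1] delta_in_part_Hmn[of Z 0 1] by (simp_all add: heis_support_def)
  have yc: "?y \<in> car ?L" and zc: "?z \<in> car ?L"
    using y z lsa_part_subset[OF lie_superalgebra_Hmn] by blast+
  have yy: "brk ?L ?y ?y = ?z"
    by (simp add: brk_central_eq[OF Hmn_brk] Hmn_form_delta_Y cscale_simps)
  define t where "t = f ?y ?z"
  have t: "t \<in> car M"
    unfolding t_def by (rule ext_pairing_closed[OF f yc zc])
  have "f ?z ?y = t + t"
    using ext_pairing_brk_left[OF f y y yc, unfolded yy, folded t_def] lsa_scl_minus[OF M t, of 1]
      lsa_scl_one[OF M t]
    by simp
  moreover have "f ?z ?y + t = 0"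
    using ext_pairing_swap[OF f z y] lsa_scl_one[OF M t] by (simp add: t_def)
  ultimately have "scl M 3 t = 0"
    using lsa_scl_add_left[OF M t, of 2 1] lsa_scl_add_left[OF M t, of 1 1] lsa_scl_one[OF M t]
    by (simp add: add.assoc)
  then have "t = 0"
    using lsa_scl_cancel[OF M t] three by simp
  then show ?thesis
    using \<open>f ?z ?y = t + t\<close> by simp
qed

text \<open>Z = [x, x'] for basis vectors x, x' both commuting with c, so f (Z, c) vanishes by the
  relation for f ([x, x'], c). Such x, x' exist unless L = H(0,1) and c = y_1.\<close>

lemma Hmn_ext_pairing_Z_vanish:
  fixes M :: "('k::field, 'm::ab_group_add) lsa"
  assumes three: "(3::'k) \<noteq> 0" and mn: "2 \<le> m + n \<or> (m = 0 \<and> n = 1)"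
    and M: "lie_superalgebra M" and f: "ext_pairing (Hmn m n) M f" and c: "c \<in> heis_support (2 * m) n"
  shows "f (delta Z) (delta c) = 0"
proof -
  let ?L = "Hmn m n :: ('k, idx \<Rightarrow> 'k) lsa"
  have brk: "brk ?L u v = cscale (Hmn_form m n u v) (delta Z)" for u v
    by (rule brk_central_eq[OF Hmn_brk])
  have via_pair: "f (delta Z) (delta c) = 0"
    if "a \<in> heis_support (2 * m) n" "b \<in> heis_support (2 * m) n"
      "Hmn_form m n (delta a) (delta b) = (1::'k)"
      "Hmn_form m n (delta b) (delta c) = (0::'k)" "Hmn_form m n (delta a) (delta c) = (0::'k)" for a b
  proof -
    have "delta c \<in> car ?L"
      using c by (simp add: Hmn_car delta_in_supp_in)
    then have "f (brk ?L (delta a) (delta b)) (delta c) = 0"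
      by (rule ext_pairing_brk_eq_0[OF lie_superalgebra_Hmn M f delta_in_part_Hmn[OF that(1)]
          delta_in_part_Hmn[OF that(2)]]) (simp_all add: brk that(4,5) cscale_simps)
    then show ?thesis
      by (simp add: brk that(3) cscale_simps)
  qed
  have pair_X: ?thesis if "1 \<le> k" "k \<le> m" "c \<noteq> X k" "c \<noteq> X (m + k)" for k
    using that
    by (intro via_pair[of "X k" "X (m + k)"])
      (simp_all add: heis_support_def Hmn_form_delta_X Hmn_form_delta_X_shift delta_apply_other)
  have pair_Y: ?thesis if "1 \<le> j" "j \<le> n" "c \<noteq> Y j" for j
    using that by (intro via_pair[of "Y j" "Y j"]) (simp_all add: heis_support_def Hmn_form_delta_Y delta_apply_other)
  consider "2 \<le> m" | "2 \<le> n" | "m = 1" "n = 1" | "m = 0" "n = 1"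
    using mn by linarith
  then show ?thesis
  proof cases
    case 1
    then show ?thesis
      using pair_X[of 1] pair_X[of 2] by (cases "c = X 1 \<or> c = X (m + 1)") auto
  next
    case 2
    then show ?thesis
      using pair_Y[of 1] pair_Y[of 2] by (cases "c = Y 1") auto
  next
    case 3
    then show ?thesis
      using pair_X[of 1] pair_Y[of 1] by (cases "c = Y 1") auto
  next
    case 4
    then show ?thesis
      using pair_Y[of 1] H01_ext_pairing_Z_vanish[OF three M] f by (cases "c = Y 1") auto
  qed
qed

lemma Hm_ext_pairing_Z_vanish:
  fixes M :: "('k::field, 'm::ab_group_add) lsa"
  assumes m: "2 \<le> m" and M: "lie_superalgebra M" and f: "ext_pairing (Hm m) M f"
    and c: "c \<in> heis_support m m"
  shows "f (delta Z) (delta c) = 0"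
proof -
  let ?L = "Hm m :: ('k, idx \<Rightarrow> 'k) lsa"
  obtain k where k: "1 \<le> k" "k \<le> m" "c \<noteq> X k" "c \<noteq> Y k"
    using m by (cases "c = X 1 \<or> c = Y 1") (auto intro: that[of 1] that[of 2])
  have "brk ?L (delta (X k)) (delta (Y k)) = delta Z" "brk ?L (delta (Y k)) (delta c) = 0"
    "brk ?L (delta (X k)) (delta c) = 0"
    using k by (simp_all add: brk_central_eq[OF Hm_brk] Hm_form_delta_X Hm_form_delta_Y
        delta_apply_other cscale_simps)
  then show ?thesis
    using ext_pairing_brk_eq_0[OF lie_superalgebra_Hm M f delta_in_part_Hm delta_in_part_Hm,
        of "X k" "Y k" "delta c"] k c
    by (simp add: heis_support_def Hm_car delta_in_supp_in)
qed

lemma triangular_sum: "m * (m - 1) div 2 + m * (m + 1) div 2 = (m::nat) ^ 2"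
proof -
  have "even (m * (m - 1))"
    by (cases "even m") auto
  then obtain k where k: "m * (m - 1) = 2 * k"
    by (rule evenE)
  moreover have "m * (m + 1) = m * (m - 1) + 2 * m" "m ^ 2 = m * (m - 1) + m"
    by (cases m; simp add: power2_eq_square)+
  ultimately show ?thesis
    by simp
qed

theorem is_ext_square_Hmn:
  assumes "(3::'k::field) \<noteq> 0" and "2 \<le> m + n \<or> (m = 0 \<and> n = 1)"
  shows "is_ext_square (Hmn m n :: ('k, idx \<Rightarrow> 'k) lsa)
           (Aab (2 * m ^ 2 - m + n * (n + 1) div 2) (2 * m * n)) TYPE('m::ab_group_add)"
proof -
  have "is_ext_square (Hmn m n :: ('k, idx \<Rightarrow> 'k) lsa)
      (Aab (2 * m * (2 * m - 1) div 2 + n * (n + 1) div 2) (2 * m * n)) TYPE('m)"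
    by (rule is_ext_square_heis[OF lie_superalgebra_Hmn Hmn_car Hmn_evp Hmn_odp Hmn_scl])
      (auto simp: Hmn_brk intro: Hmn_ext_pairing_Z_vanish[OF assms])
  moreover have "2 * m * (2 * m - 1) div 2 = 2 * m ^ 2 - m"
    by (simp add: power2_eq_square diff_mult_distrib2 algebra_simps)
  ultimately show ?thesis
    by simp
qed

theorem is_ext_square_Hm:
  assumes "2 \<le> m"
  shows "is_ext_square (Hm m :: ('k::field, idx \<Rightarrow> 'k) lsa) (Aab (m ^ 2) (m ^ 2)) TYPE('m::ab_group_add)"
proof -
  have "is_ext_square (Hm m :: ('k, idx \<Rightarrow> 'k) lsa)
      (Aab (m * (m - 1) div 2 + m * (m + 1) div 2) (m * m)) TYPE('m)"
    by (rule is_ext_square_heis[OF lie_superalgebra_Hm Hm_car Hm_evp Hm_odp Hm_scl])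
      (auto simp: Hm_brk intro: Hm_ext_pairing_Z_vanish[OF assms])
  then show ?thesis
    by (simp only: triangular_sum power2_eq_square[symmetric])
qed

text \<open>In H(1,0) no pair of basis vectors with bracket Z commutes with x_1 or x_2, so x_1 \<and> Z and
  x_2 \<and> Z survive.\<close>

theorem is_ext_square_H10:
  "is_ext_square (Hmn 1 0 :: ('k::field, idx \<Rightarrow> 'k) lsa) (Aab 3 0) TYPE('m::ab_group_add)"
proof -
  let ?L = "Hmn 1 0 :: ('k, idx \<Rightarrow> 'k) lsa" and ?S = "heis_support (2 * 1) 0"
  define PE where "PE = {(X 1, X 2), (X 1, Z), (X 2, Z)}"
  have "finite PE" "card PE = 3" "finite {}" "card {} = 0"
    by (simp_all add: PE_def)
  then obtain g h :: "nat \<Rightarrow> idx \<times> idx" where g: "bij_betw g {1..3} PE" and h: "bij_betw h {1..0} {}"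
    using ex_bij_betw_nat_finite_1 by metis
  interpret pair_basis ?L ?S "idx_parity False" PE "{}" g h 3 0
    using g h
    by unfold_locales (auto simp: PE_def heis_support_def Hmn_car Hmn_evp Hmn_odp Hmn_scl
        intro: lie_superalgebra_Hmn)
  have "Hmn_form 1 0 u v = u (X 1) * v (X 2) - u (X 2) * v (X 1)" for u v :: "idx \<Rightarrow> 'k"
    by (simp add: Hmn_form_def numeral_2_eq_2)
  then have brk: "brk ?L u v = (\<lambda>i. if i = Z then u (X 1) * v (X 2) - u (X 2) * v (X 1) else 0)" for u v
    by (simp only: Hmn_brk)
  note brk_simp = brk brk[simplified]
  have odd_0: "x = 0" if "x \<in> part ?L True" for x
    using that by (auto simp: part_def Hmn_odp heis_support_odd supp_in_iff fun_eq_iff YS_def)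
  have "ext_pairing ?L (Aab 3 0) wedge"
  proof (rule ext_pairing_wedgeI)
    fix a b x x' y assume x: "x \<in> part ?L a" and x': "x' \<in> part ?L b"
    show "wedge (brk ?L x x') y = wedge x (brk ?L x' y) - cscale (psign (a \<and> b)) (wedge x' (brk ?L x y))"
    proof (cases "a \<or> b")
      case True
      then have "x = 0 \<or> x' = 0"
        using odd_0 x x' by (cases a; cases b) auto
      then have "wedge (brk ?L x x') y = 0" "wedge x (brk ?L x' y) = 0" "wedge x' (brk ?L x y) = 0"
        by (auto intro!: wedge_eq_0I simp: brk_simp wedge_coord_def)
      then show ?thesis
        by (simp add: cscale_simps)
    next
      case False
      have "wedge (brk ?L x x') y = cscale 1 (wedge x (brk ?L x' y)) - cscale 1 (wedge x' (brk ?L x y))"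
        by (rule wedge_eqI) (auto simp: PE_def brk_simp wedge_coord_def swap_sign_def algebra_simps)
      then show ?thesis
        using False by (simp add: cscale_simps)
    qed
  next
    fix a b c x y y' assume x: "x \<in> part ?L a" and y: "y \<in> part ?L b" and y': "y' \<in> part ?L c"
    show "wedge x (brk ?L y y') = cscale (psign (c \<and> (a \<noteq> b))) (wedge (brk ?L y' x) y)
        - cscale (psign (a \<and> b)) (wedge (brk ?L y x) y')"
    proof (cases "a \<or> b \<or> c")
      case True
      then have "x = 0 \<or> y = 0 \<or> y' = 0"
        using odd_0 x y y' by (cases a; cases b; cases c) auto
      then have "wedge x (brk ?L y y') = 0" "wedge (brk ?L y' x) y = 0" "wedge (brk ?L y x) y' = 0"
        by (auto intro!: wedge_eq_0I simp: brk_simp wedge_coord_def)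
      then show ?thesis
        by (simp add: cscale_simps)
    next
      case False
      have "wedge x (brk ?L y y') = cscale 1 (wedge (brk ?L y' x) y) - cscale 1 (wedge (brk ?L y x) y')"
        by (rule wedge_eqI) (auto simp: PE_def brk_simp wedge_coord_def swap_sign_def algebra_simps)
      then show ?thesis
        using False by simp
    qed
  next
    show "wedge (brk ?L u v) (brk ?L u' v') = 0" for u v u' v'
      by (rule wedge_eq_0I) (auto simp: PE_def brk_simp wedge_coord_def)
  qed
  then show ?thesis
  proof (rule is_ext_square_pair_basis)
    fix M :: "('k, 'm) lsa" and f a b
    assume f: "ext_pairing ?L M f" and a: "a \<in> ?S" and b: "b \<in> ?S"
      and unpaired: "(a, b) \<notin> PE \<union> {}" "(b, a) \<notin> PE \<union> {}"
    have S: "?S = {X 1, X 2, Z}"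
      by (auto simp: heis_support_def numeral_2_eq_2 XS_def YS_def atLeastAtMostSuc_conv)
    have "a = b" "\<not> idx_parity False a"
      using a b unpaired unfolding S PE_def by auto
    then show "f (delta a) (delta b) = 0"
      using ext_pairing_diag[OF f] delta_in_part[OF a] by (simp add: part_def)
  qed
qed

corollary is_ext_square_H01:
  assumes "(3::'k::field) \<noteq> 0"
  shows "is_ext_square (Hmn 0 1 :: ('k, idx \<Rightarrow> 'k) lsa) (Aab 1 0) TYPE('m::ab_group_add)"
  using is_ext_square_Hmn[OF assms, of 0 1] by simp

text \<open>In H_1, Z = [x_1, y_1] is odd and y_1 \<and> Z vanishes only because 2 is invertible:
  the relations give f (Z, y_1) = - f (y_1, Z) and f (Z, y_1) = f (y_1, Z).\<close>

theorem is_ext_square_H1: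
  assumes two: "(2::'k::field) \<noteq> 0"
  shows "is_ext_square (Hm 1 :: ('k, idx \<Rightarrow> 'k) lsa) (Aab 1 2) TYPE('m::ab_group_add)"
proof -
  let ?L = "Hm 1 :: ('k, idx \<Rightarrow> 'k) lsa" and ?S = "heis_support 1 1"
  define PE where "PE = {(Y 1, Y 1)}"
  define PO where "PO = {(X 1, Y 1), (X 1, Z)}"
  have "finite PE" "card PE = 1" "finite PO" "card PO = 2"
    by (simp_all add: PE_def PO_def)
  then obtain g h :: "nat \<Rightarrow> idx \<times> idx" where g: "bij_betw g {1..1} PE" and h: "bij_betw h {1..2} PO"
    using ex_bij_betw_nat_finite_1 by metis
  interpret pair_basis ?L ?S "idx_parity True" PE PO g h 1 2
    using g h
    by unfold_locales (auto simp: PE_def PO_def heis_support_def Hm_car Hm_evp Hm_odp Hm_scl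
        intro: lie_superalgebra_Hm)
  have "Hm_form 1 u v = u (X 1) * v (Y 1) - u (Y 1) * v (X 1)" for u v :: "idx \<Rightarrow> 'k"
    by (simp add: Hm_form_def)
  then have brk: "brk ?L u v = (\<lambda>i. if i = Z then u (X 1) * v (Y 1) - u (Y 1) * v (X 1) else 0)" for u v
    by (simp only: Hm_brk)
  note brk_simp = brk brk[simplified]
  have "ext_pairing ?L (Aab 1 2) wedge"
  proof (rule ext_pairing_wedgeI)
    fix a b x x' y assume x: "x \<in> part ?L a" and x': "x' \<in> part ?L b"
    have "wedge (brk ?L x x') y = cscale 1 (wedge x (brk ?L x' y)) - cscale (psign (a \<and> b)) (wedge x' (brk ?L x y))"
      by (rule wedge_eqI) (cases a; cases b; auto simp: PE_def PO_def brk_simp wedge_coord_def swap_sign_def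
          psign_def algebra_simps Hm_part_coord[OF x] Hm_part_coord[OF x'])
    then show "wedge (brk ?L x x') y = wedge x (brk ?L x' y) - cscale (psign (a \<and> b)) (wedge x' (brk ?L x y))"
      by (simp add: cscale_simps)
  next
    fix a b c x y y' assume x: "x \<in> part ?L a" and y: "y \<in> part ?L b" and y': "y' \<in> part ?L c"
    show "wedge x (brk ?L y y') = cscale (psign (c \<and> (a \<noteq> b))) (wedge (brk ?L y' x) y)
        - cscale (psign (a \<and> b)) (wedge (brk ?L y x) y')"
      by (rule wedge_eqI) (cases a; cases b; cases c; auto simp: PE_def PO_def brk_simp wedge_coord_def
          swap_sign_def psign_def algebra_simps Hm_part_coord[OF x] Hm_part_coord[OF y] Hm_part_coord[OF y'])
  next
    show "wedge (brk ?L u v) (brk ?L u' v') = 0" for u v u' v'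
      by (rule wedge_eq_0I) (auto simp: PE_def PO_def brk_simp wedge_coord_def)
  qed
  then show ?thesis
  proof (rule is_ext_square_pair_basis)
    fix M :: "('k, 'm) lsa" and f a b
    assume M: "lie_superalgebra M" and f: "ext_pairing ?L M f" and a: "a \<in> ?S" and b: "b \<in> ?S"
      and unpaired: "(a, b) \<notin> PE \<union> PO" "(b, a) \<notin> PE \<union> PO"
    let ?x = "delta (X 1) :: idx \<Rightarrow> 'k" and ?y = "delta (Y 1) :: idx \<Rightarrow> 'k" and ?z = "delta Z :: idx \<Rightarrow> 'k"
    have x: "?x \<in> part ?L False" and y: "?y \<in> part ?L True" and z: "?z \<in> part ?L True"
      using delta_in_part[of "X 1"] delta_in_part[of "Y 1"] delta_in_part[of Z] by (simp_all add: heis_support_def)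
    have xc: "?x \<in> car ?L" and yc: "?y \<in> car ?L" and zc: "?z \<in> car ?L"
      using x y z lsa_part_subset[OF lie_superalgebra_Hm] by blast+
    have xy: "brk ?L ?x ?y = ?z" and "brk ?L ?y ?y = 0" "brk ?L ?y ?z = 0" "brk ?L ?x ?z = 0"
      by (simp_all add: brk_simp fun_eq_iff delta_def)
    then have zz: "f ?z ?z = 0"
      using ext_pairing_brk_eq_0[OF lie_superalgebra_Hm M f x y zc] by simp
    have zy: "f ?z ?y = 0"
    proof -
      define t where "t = f ?y ?z"
      have t: "t \<in> car M"
        unfolding t_def by (rule ext_pairing_closed[OF f yc zc])
      have "f ?z ?y = - t"
        using ext_pairing_brk_left[OF f x y yc, unfolded xy \<open>brk ?L ?y ?y = 0\<close>, folded t_def]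
          bilinear_on_zero_right[OF ext_pairing_bilinear_on[OF f] lsa_lsubspace_car[OF lie_superalgebra_Hm] xc]
          lsa_scl_one[OF M t]
        by simp
      moreover have "f ?z ?y = t"
        using ext_pairing_swap[OF f z y] lsa_scl_minus[OF M t, of 1] lsa_scl_one[OF M t]
        by (simp add: t_def)
      ultimately have "t + t = 0"
        by (metis add.right_inverse)
      then have "scl M 2 t = 0"
        using lsa_scl_add_left[OF M t, of 1 1] lsa_scl_one[OF M t] by simp
      then show ?thesis
        using lsa_scl_cancel[OF M t] two \<open>f ?z ?y = t\<close> by simp
    qed
    have S: "?S = {X 1, Y 1, Z}"
      by (auto simp: heis_support_def XS_def YS_def)
    have "(a = X 1 \<and> b = X 1) \<or> (a = Z \<and> b = Z) \<or> (a = Z \<and> b = Y 1) \<or> (a = Y 1 \<and> b = Z)"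
      using a b unpaired unfolding S PE_def PO_def by auto
    then show "f (delta a) (delta b) = 0"
      using ext_pairing_diag[OF f] x zz zy ext_pairing_swap[OF f y z] lsa_scl_zero_right[OF M]
      by (auto simp: part_def)
  qed
qed

theorem mainTheorem17:
  assumes "(2::'k::field) \<noteq> 0" and "(3::'k) \<noteq> 0"
  shows "is_ext_square (Hmn 1 0 :: ('k, idx \<Rightarrow> 'k) lsa) (Aab 3 0 :: ('k, idx \<Rightarrow> 'k) lsa) TYPE('m::ab_group_add)
       \<and> is_ext_square (Hmn 0 1 :: ('k, idx \<Rightarrow> 'k) lsa) (Aab 1 0 :: ('k, idx \<Rightarrow> 'k) lsa) TYPE('m)
       \<and> (\<forall>m n. m + n \<ge> 2 \<longrightarrow>
            is_ext_square (Hmn m n :: ('k, idx \<Rightarrow> 'k) lsa)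
              (Aab (2 * m ^ 2 - m + n * (n + 1) div 2) (2 * m * n) :: ('k, idx \<Rightarrow> 'k) lsa) TYPE('m))
       \<and> is_ext_square (Hm 1 :: ('k, idx \<Rightarrow> 'k) lsa) (Aab 1 2 :: ('k, idx \<Rightarrow> 'k) lsa) TYPE('m)
       \<and> (\<forall>m. m \<ge> 2 \<longrightarrow>
            is_ext_square (Hm m :: ('k, idx \<Rightarrow> 'k) lsa) (Aab (m ^ 2) (m ^ 2) :: ('k, idx \<Rightarrow> 'k) lsa) TYPE('m))"
  using assms
  by (intro conjI allI impI is_ext_square_H10 is_ext_square_H01 is_ext_square_Hmn is_ext_square_H1
      is_ext_square_Hm) simp_all

end
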